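(* There exists $C>0$ such that for all $(x,\omega)\in S^*(\mathbb{R}^n)$: $\frac1C\tau^{2n}\le V(B_\tau(x,\omega))\le C\tau^{2n}$ if $\tau\in(0,1)$, and $\frac1C\tau^{n}\le V(B_\tau(x,\omega))\le C\tau^{n}$ if $\tau\ge1$. In particular $V(B_{c\tau}(x,\omega))\le C^2c^{2n}V(B_\tau(x,\omega))$ for all $\tau>0$, $c\ge1$, so $(S^*(\mathbb{R}^n),d,dx\,d\omega)$ is a doubling metric measure space.
   Context: Fix $n\ge2$. $S^*(\mathbb{R}^n):=\mathbb{R}^n\times S^{n-1}$ with measure $dx\,d\omega$ (Lebesgue measure times the standard surface measure on $S^{n-1}$). A piecewise $C^1$ curve $\gamma(s)=(x(s),\hat\xi(s))$, $s\in[0,1]$, is horizontal if $\hat\xi(s)\cdot x'(s)=0$ for a.e. $s$. The metric $d((x,\omega),(y,\nu))$ is the infimum of $\int_0^1|\gamma'(s)|ds$ over horizontal curves from $(x,\omega)$ to $(y,\nu)$, with $|\gamma'|^2=|x'|^2+|\hat\xi'|^2$ (Euclidean metric on $\mathbb{R}^n$, round metric on $S^{n-1}$). $B_\tau(x,\omega)$ denotes the open $d$-ball of radius $\tau$ about $(x,\omega)$ and $V(\cdot)$ the measure of a set. *)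

theory Defs
  imports "HOL-Analysis.Analysis"
begin

text \<open>Unit cotangent sphere bundle: points (x, w) with x in R^n and w in S^{n-1}.
  R^n is modelled by an arbitrary euclidean space 'a of dimension DIM('a).\<close>

definition cosphere :: "('a::euclidean_space \<times> 'a) set" where
  "cosphere = UNIV \<times> sphere 0 1"

definition horizontal_curve ::
  "(real \<Rightarrow> 'a::euclidean_space \<times> 'a) \<Rightarrow> ('a \<times> 'a) \<Rightarrow> ('a \<times> 'a) \<Rightarrow> bool" where
  "horizontal_curve g p q \<longleftrightarrow>
     g piecewise_C1_differentiable_on {0..1} \<and>
     (\<forall>s\<in>{0..1}. g s \<in> cosphere) \<and>
     g 0 = p \<and> g 1 = q \<and>
     (AE s in lborel. s \<in> {0..1} \<longrightarrow>
        snd (g s) \<bullet> vector_derivative (\<lambda>t. fst (g t)) (at s) = 0)"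

text \<open>Length: integral of |gamma'| with |gamma'|^2 = |x'|^2 + |xi'|^2 (this is exactly the
  norm on the product type; the round metric on S^{n-1} is the one induced from R^n).
  Taken as an ennreal-valued integral so that non-integrable speeds give infinite length.\<close>

definition curve_length :: "(real \<Rightarrow> 'a::euclidean_space \<times> 'a) \<Rightarrow> ennreal" where
  "curve_length g = (\<integral>\<^sup>+ s. ennreal (norm (vector_derivative g (at s))) * indicator {0..1} s \<partial>lborel)"

definition sR_dist :: "('a::euclidean_space \<times> 'a) \<Rightarrow> ('a \<times> 'a) \<Rightarrow> ennreal" where
  "sR_dist p q = (INF g \<in> {g. horizontal_curve g p q}. curve_length g)"

definition sR_ball :: "('a::euclidean_space \<times> 'a) \<Rightarrow> real \<Rightarrow> ('a \<times> 'a) set" where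
  "sR_ball p \<tau> = {q. sR_dist p q < ennreal \<tau>}"

text \<open>Standard surface measure on S^{n-1}: sigma(A) = n * Leb({r w : 0 < r <= 1, w in A}),
  realized as the pushforward of n * Lebesgue measure on the unit ball under x |-> x/|x|.\<close>

definition sphere_measure :: "'a::euclidean_space measure" where
  "sphere_measure = distr (density lborel (\<lambda>x. ennreal (real DIM('a)) * indicator (ball 0 1) x))
                          borel (\<lambda>x. sgn x)"

definition cosphere_measure :: "('a::euclidean_space \<times> 'a) measure" where
  "cosphere_measure = lborel \<Otimes>\<^sub>M sphere_measure"

definition vol :: "('a::euclidean_space \<times> 'a) set \<Rightarrow> ennreal" where
  "vol A = emeasure cosphere_measure A"

end

theory Submission
  imports Defs
begin

text \<open>
  A horizontal curve of length \<open>L\<close> from \<open>(x, \<omega>)\<close> to \<open>(y, \<nu>)\<close> satisfies \<open>\<bar>y - x\<bar> \<le> L\<close>,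
  \<open>\<bar>\<nu> - \<omega>\<bar> \<le> L\<close> and, since horizontality turns \<open>\<omega> \<bullet> x'\<close> into \<open>(\<omega> - \<xi>) \<bullet> x'\<close>, also
  \<open>\<bar>(y - x) \<bullet> \<omega>\<bar> \<le> L\<^sup>2\<close>. Conversely, concatenating horizontal translations and rotations of the
  fibre reaches every point with \<open>\<bar>(y - x) \<bullet> \<omega>\<bar> < \<delta>\<^sup>2\<close>, horizontal displacement \<open>< \<delta>\<close> and \<open>\<nu>\<close> in a
  \<open>\<delta>\<close>-cap around \<open>\<omega>\<close> within length \<open>9 \<delta>\<close> (the \<open>\<omega>\<close>-direction costs \<open>O(\<surd>h)\<close> via a
  parallelogram), and every point at all within length \<open>\<bar>y - x\<bar> + 2\<pi>\<close>.

  So for \<open>\<tau> < 1\<close> the ball is squeezed between products of a slab of volume of order \<open>\<tau>^(n+1)\<close>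
  and a spherical cap of measure of order \<open>\<tau>^(n-1)\<close>, giving \<open>\<tau>^(2n)\<close>; for \<open>\<tau> \<ge> 1\<close> it lies
  between a box of side of order \<open>\<tau>\<close> times a fixed cap and a box of side \<open>2\<tau>\<close> times the whole
  sphere, giving \<open>\<tau>^n\<close>.
  Slabs and caps are measured after moving \<open>\<omega>\<close> to a coordinate vector by a reflection, under
  which Lebesgue measure is invariant. The doubling estimate follows from the two power laws alone.
\<close>

section \<open>Horizontal curves and their length\<close>

text \<open>A Borel representative of the derivative, so that lengths of pieces can be rescaled and spliced.\<close>

definition piecewise_derivative :: "(real \<Rightarrow> 'b::real_normed_vector) \<Rightarrow> real set \<Rightarrow> (real \<Rightarrow> 'b) \<Rightarrow> bool"
  where "piecewise_derivative g S F \<longleftrightarrow> finite S \<and> F \<in> borel_measurable borel \<and>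
     (\<forall>s\<in>{0<..<1} - S. (g has_vector_derivative F s) (at s)) \<and> (\<forall>s. s \<notin> {0..1} \<longrightarrow> F s = 0)"

lemma piecewise_derivativeD:
  assumes "piecewise_derivative g S F"
  shows "finite S" "F \<in> borel_measurable borel"
    "\<And>s. s \<in> {0<..<1} - S \<Longrightarrow> (g has_vector_derivative F s) (at s)"
    "\<And>s. s \<notin> {0..1} \<Longrightarrow> F s = 0"
  using assms by (auto simp: piecewise_derivative_def)

lemma piecewise_C1_imp_piecewise_derivative:
  fixes g :: "real \<Rightarrow> 'b::euclidean_space"
  assumes "g piecewise_C1_differentiable_on {0..1}"
  obtains S F where "piecewise_derivative g S F"
proof -
  from assms obtain S where S: "finite S" "g C1_differentiable_on ({0..1} - S)"
    by (auto simp: piecewise_C1_differentiable_on_def)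
  then obtain D where D: "\<forall>s\<in>{0..1} - S. (g has_vector_derivative D s) (at s)"
     "continuous_on ({0..1} - S) D"
    unfolding C1_differentiable_on_def by blast
  define T where "T = {0<..<1} - S"
  have "open T" using S(1) by (auto simp: T_def intro!: open_Diff finite_imp_closed)
  moreover have "continuous_on T D" using D(2) by (rule continuous_on_subset) (auto simp: T_def)
  ultimately have "(\<lambda>s. indicator T s *\<^sub>R D s) \<in> borel_measurable borel"
    by (intro borel_measurable_continuous_on_indicator) auto
  then show ?thesis using S(1) D(1)
    by (intro that[of S "\<lambda>s. indicator T s *\<^sub>R D s"])
       (auto simp: piecewise_derivative_def T_def indicator_def)
qed

lemma vector_derivative_fst_piecewise_derivative:
  assumes "piecewise_derivative g S F" "s \<in> {0<..<1} - S"
  shows "vector_derivative (\<lambda>t. fst (g t)) (at s) = fst (F s)"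
  using bounded_linear.has_vector_derivative[OF bounded_linear_fst piecewise_derivativeD(3)[OF assms]]
  by (rule vector_derivative_at)

lemma AE_piecewise_derivative_interior:
  assumes "piecewise_derivative g S F"
  shows "AE s in lborel. s \<in> {0..1} \<longrightarrow> s \<in> {0<..<1} - S"
proof -
  have "AE s in lborel. s \<notin> S \<union> {0, 1}"
    using piecewise_derivativeD(1)[OF assms] by (intro AE_not_in finite_imp_null_set_lborel) auto
  then show ?thesis by eventually_elim auto
qed

lemma curve_length_piecewise_derivative:
  assumes "piecewise_derivative g S F"
  shows "curve_length g = (\<integral>\<^sup>+ s. ennreal (norm (F s)) \<partial>lborel)"
  unfolding curve_length_def
proof (rule nn_integral_cong_AE)
  show "AE s in lborel. ennreal (norm (vector_derivative g (at s))) * indicator {0..1} s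
     = ennreal (norm (F s))"
    using AE_piecewise_derivative_interior[OF assms]
    by eventually_elim
      (auto simp: vector_derivative_at[OF piecewise_derivativeD(3)[OF assms]]
         piecewise_derivativeD(4)[OF assms] indicator_def)
qed

lemma horizontal_iff_piecewise_derivative:
  assumes "piecewise_derivative g S F"
  shows "(AE s in lborel. s \<in> {0..1} \<longrightarrow> snd (g s) \<bullet> vector_derivative (\<lambda>t. fst (g t)) (at s) = 0)
     \<longleftrightarrow> (AE s in lborel. s \<in> {0..1} \<longrightarrow> snd (g s) \<bullet> fst (F s) = 0)"
proof -
  have "AE s in lborel. s \<in> {0..1} \<longrightarrow> vector_derivative (\<lambda>t. fst (g t)) (at s) = fst (F s)"
    using AE_piecewise_derivative_interior[OF assms]
    by eventually_elim (simp add: vector_derivative_fst_piecewise_derivative[OF assms])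
  then show ?thesis
    by (intro iffI) (erule AE_mp, erule AE_mp, intro AE_I2, simp)+
qed

lemma horizontal_curve_iff_piecewise_derivative:
  assumes "piecewise_derivative g S F"
  shows "horizontal_curve g p q \<longleftrightarrow> g piecewise_C1_differentiable_on {0..1} \<and>
     (\<forall>s\<in>{0..1}. g s \<in> cosphere) \<and> g 0 = p \<and> g 1 = q \<and>
     (AE s in lborel. s \<in> {0..1} \<longrightarrow> snd (g s) \<bullet> fst (F s) = 0)"
  unfolding horizontal_curve_def horizontal_iff_piecewise_derivative[OF assms] ..

lemma smooth_horizontal_curve:
  fixes X Xi :: "real \<Rightarrow> 'a::euclidean_space"
  assumes dX: "\<And>s. (X has_vector_derivative X' s) (at s)"
    and dXi: "\<And>s. (Xi has_vector_derivative Xi' s) (at s)"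
    and cont: "continuous_on UNIV X'" "continuous_on UNIV Xi'"
    and unit: "\<And>s. s \<in> {0..1} \<Longrightarrow> norm (Xi s) = 1"
    and horizontal: "\<And>s. s \<in> {0..1} \<Longrightarrow> Xi s \<bullet> X' s = 0"
    and speed: "\<And>s. s \<in> {0..1} \<Longrightarrow> norm (X' s, Xi' s) \<le> M"
  shows "horizontal_curve (\<lambda>s. (X s, Xi s)) (X 0, Xi 0) (X 1, Xi 1)"
    and "curve_length (\<lambda>s. (X s, Xi s)) \<le> ennreal M"
proof -
  have d: "((\<lambda>s. (X s, Xi s)) has_vector_derivative (X' s, Xi' s)) (at s)" for s
    using dX dXi by (rule has_vector_derivative_Pair)
  have "(\<lambda>s. (X s, Xi s)) C1_differentiable_on {0..1}"
    unfolding C1_differentiable_on_def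
    by (rule exI[of _ "\<lambda>s. (X' s, Xi' s)"])
       (auto intro!: d continuous_on_Pair continuous_on_subset[OF cont(1)] continuous_on_subset[OF cont(2)])
  then show "horizontal_curve (\<lambda>s. (X s, Xi s)) (X 0, Xi 0) (X 1, Xi 1)"
    unfolding horizontal_curve_def
    using C1_differentiable_imp_piecewise unit horizontal vector_derivative_at[OF dX]
    by (auto simp: cosphere_def intro!: AE_I2)
  have "curve_length (\<lambda>s. (X s, Xi s)) \<le> (\<integral>\<^sup>+ s. ennreal M * indicator {0..1::real} s \<partial>lborel)"
    unfolding curve_length_def using speed
    by (intro nn_integral_mono) (auto simp: vector_derivative_at[OF d] indicator_def intro!: ennreal_leI)
  also have "\<dots> = ennreal M" by (subst nn_integral_cmult_indicator) auto
  finally show "curve_length (\<lambda>s. (X s, Xi s)) \<le> ennreal M" .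
qed

lemma horizontal_segment:
  fixes x v \<xi> :: "'a::euclidean_space"
  assumes "norm \<xi> = 1" "v \<bullet> \<xi> = 0"
  shows "horizontal_curve (\<lambda>s. (x + s *\<^sub>R v, \<xi>)) (x, \<xi>) (x + v, \<xi>)"
    and "curve_length (\<lambda>s. (x + s *\<^sub>R v, \<xi>)) \<le> ennreal (norm v)"
proof -
  have dX: "((\<lambda>s. x + s *\<^sub>R v) has_vector_derivative v) (at s)"
   and dXi: "((\<lambda>s. \<xi>) has_vector_derivative 0) (at s)" for s
    by (auto intro!: derivative_eq_intros)
  note smooth = smooth_horizontal_curve[OF dX dXi, of "norm v"]
  show "horizontal_curve (\<lambda>s. (x + s *\<^sub>R v, \<xi>)) (x, \<xi>) (x + v, \<xi>)"
    and "curve_length (\<lambda>s. (x + s *\<^sub>R v, \<xi>)) \<le> ennreal (norm v)"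
    using smooth assms by (simp_all add: inner_commute)
qed

lemma norm_orthonormal_combination:
  fixes a b :: "'a::real_inner"
  assumes "norm a = 1" "norm b = 1" "a \<bullet> b = 0"
  shows "norm (s *\<^sub>R a + t *\<^sub>R b) = sqrt (s\<^sup>2 + t\<^sup>2)"
proof -
  have "(s *\<^sub>R a + t *\<^sub>R b) \<bullet> (s *\<^sub>R a + t *\<^sub>R b) = s\<^sup>2 * (a \<bullet> a) + t\<^sup>2 * (b \<bullet> b) + 2 * s * t * (a \<bullet> b)"
    by (simp add: algebra_simps inner_commute power2_eq_square)
  also have "\<dots> = s\<^sup>2 + t\<^sup>2" using assms by (simp add: norm_eq_sqrt_inner)
  finally show ?thesis by (simp add: norm_eq_sqrt_inner)
qed

lemma horizontal_rotation:
  fixes x a b :: "'a::euclidean_space"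
  assumes ab: "norm a = 1" "norm b = 1" "a \<bullet> b = 0"
  defines "\<xi> \<equiv> \<lambda>\<phi>. cos \<phi> *\<^sub>R a + sin \<phi> *\<^sub>R b"
  shows "horizontal_curve (\<lambda>s. (x, \<xi> (\<alpha> + \<beta> * s))) (x, \<xi> \<alpha>) (x, \<xi> (\<alpha> + \<beta>))"
    and "curve_length (\<lambda>s. (x, \<xi> (\<alpha> + \<beta> * s))) \<le> ennreal \<bar>\<beta>\<bar>"
proof -
  have dX: "((\<lambda>s. x) has_vector_derivative 0) (at s)"
   and dXi: "((\<lambda>s. \<xi> (\<alpha> + \<beta> * s)) has_vector_derivative
      (\<beta> * cos (\<alpha> + \<beta> * s)) *\<^sub>R b - (\<beta> * sin (\<alpha> + \<beta> * s)) *\<^sub>R a) (at s)" for s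
    by (auto simp: \<xi>_def algebra_simps intro!: derivative_eq_intros)
  have unit: "norm (\<xi> \<phi>) = 1" for \<phi>
    using norm_orthonormal_combination[OF ab] by (simp add: \<xi>_def)
  have speed: "norm ((\<beta> * cos \<phi>) *\<^sub>R b - (\<beta> * sin \<phi>) *\<^sub>R a) = \<bar>\<beta>\<bar>" for \<phi>
  proof -
    have "norm ((\<beta> * cos \<phi>) *\<^sub>R b + (- (\<beta> * sin \<phi>)) *\<^sub>R a) = sqrt ((\<beta> * cos \<phi>)\<^sup>2 + (- (\<beta> * sin \<phi>))\<^sup>2)"
      using ab by (intro norm_orthonormal_combination) (auto simp: inner_commute)
    also have "(\<beta> * cos \<phi>)\<^sup>2 + (- (\<beta> * sin \<phi>))\<^sup>2 = \<beta>\<^sup>2"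
      by (simp add: power_mult_distrib flip: distrib_left)
    finally show ?thesis by simp
  qed
  note smooth = smooth_horizontal_curve[OF dX dXi _ _ unit, of "\<bar>\<beta>\<bar>"]
  have "horizontal_curve (\<lambda>s. (x, \<xi> (\<alpha> + \<beta> * s))) (x, \<xi> (\<alpha> + \<beta> * 0)) (x, \<xi> (\<alpha> + \<beta> * 1))"
    by (rule smooth(1)) (auto simp: speed \<xi>_def intro!: continuous_intros)
  then show "horizontal_curve (\<lambda>s. (x, \<xi> (\<alpha> + \<beta> * s))) (x, \<xi> \<alpha>) (x, \<xi> (\<alpha> + \<beta>))"
    by simp
  show "curve_length (\<lambda>s. (x, \<xi> (\<alpha> + \<beta> * s))) \<le> ennreal \<bar>\<beta>\<bar>"
    by (rule smooth(2)) (auto simp: speed \<xi>_def intro!: continuous_intros)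
qed

lemma AE_lborel_affine:
  fixes c t :: real
  assumes "AE s in lborel. P s" "c \<noteq> 0"
  shows "AE s in lborel. P (t + c * s)"
proof -
  from assms(1) obtain N where "{s \<in> space lborel. \<not> P s} \<subseteq> N" "emeasure lborel N = 0" "N \<in> sets lborel"
    by (rule AE_E)
  then have N: "{s. \<not> P s} \<subseteq> N" "N \<in> null_sets lborel" by (auto simp: null_sets_def)
  have "AE s in lborel. t + c * s \<notin> N"
    using assms(2) N(2) AE_not_in[OF N(2)] by (intro AE_borel_affine) (auto simp: pred_def)
  then show ?thesis by eventually_elim (use N(1) in auto)
qed

lemma joinpaths_has_vector_derivative_left:
  assumes "(g1 has_vector_derivative D) (at (2 * s))" "s < 1/2"
  shows "((g1 +++ g2) has_vector_derivative 2 *\<^sub>R D) (at s)"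
proof -
  have "((\<lambda>t::real. 2 * t) has_vector_derivative 2) (at s)"
    by (auto intro!: derivative_eq_intros)
  then have "((g1 \<circ> (\<lambda>t. 2 * t)) has_vector_derivative 2 *\<^sub>R D) (at s)"
    using assms(1) by (auto intro: vector_diff_chain_at)
  then show ?thesis
    by (rule has_vector_derivative_transform_within_open[where S="{..<1/2}"])
       (use assms(2) in \<open>auto simp: joinpaths_def\<close>)
qed

lemma joinpaths_has_vector_derivative_right:
  assumes "(g2 has_vector_derivative D) (at (2 * s - 1))" "s > 1/2"
  shows "((g1 +++ g2) has_vector_derivative 2 *\<^sub>R D) (at s)"
proof -
  have "((\<lambda>t::real. 2 * t - 1) has_vector_derivative 2) (at s)"
    by (auto intro!: derivative_eq_intros)
  then have "((g2 \<circ> (\<lambda>t. 2 * t - 1)) has_vector_derivative 2 *\<^sub>R D) (at s)"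
    using assms(1) by (auto intro: vector_diff_chain_at)
  then show ?thesis
    by (rule has_vector_derivative_transform_within_open[where S="{1/2<..}"])
       (use assms(2) in \<open>auto simp: joinpaths_def\<close>)
qed

lemma piecewise_derivative_joinpaths:
  fixes g1 g2 :: "real \<Rightarrow> 'b::euclidean_space"
  assumes d1: "piecewise_derivative g1 S1 F1" and d2: "piecewise_derivative g2 S2 F2"
  defines "S \<equiv> {1/2} \<union> (\<lambda>s. s / 2) ` S1 \<union> (\<lambda>s. (s + 1) / 2) ` S2"
  shows "piecewise_derivative (g1 +++ g2) S (\<lambda>s. 2 *\<^sub>R F1 (2 * s) + 2 *\<^sub>R F2 (2 * s - 1))"
proof -
  note D1 = piecewise_derivativeD[OF d1] and D2 = piecewise_derivativeD[OF d2]
  have left: "2 * s \<in> {0<..<1} - S1" if "s \<in> {0<..<1} - S" "s < 1/2" for s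
    using that image_eqI[of s "\<lambda>s. s / 2" "2 * s" S1] by (auto simp: S_def)
  have right: "2 * s - 1 \<in> {0<..<1} - S2" if "s \<in> {0<..<1} - S" "s > 1/2" for s
    using that image_eqI[of s "\<lambda>s. (s + 1) / 2" "2 * s - 1" S2] by (auto simp: S_def)
  have "((g1 +++ g2) has_vector_derivative 2 *\<^sub>R F1 (2 * s) + 2 *\<^sub>R F2 (2 * s - 1)) (at s)"
    if s: "s \<in> {0<..<1} - S" for s
  proof (cases "s < 1/2")
    case True
    then show ?thesis using left[OF s True] D1(3) D2(4)[of "2 * s - 1"]
      by (auto intro!: joinpaths_has_vector_derivative_left)
  next
    case False
    then have "s > 1/2" using s by (auto simp: S_def)
    then show ?thesis using right[OF s] D2(3) D1(4)[of "2 * s"]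
      by (auto intro!: joinpaths_has_vector_derivative_right)
  qed
  moreover have "(\<lambda>s. 2 *\<^sub>R F1 (2 * s) + 2 *\<^sub>R F2 (2 * s - 1)) \<in> borel_measurable borel"
    using D1(2) D2(2) by measurable
  ultimately show ?thesis
    using D1 D2 by (auto simp: piecewise_derivative_def S_def)
qed

lemma nn_integral_norm_rescale:
  fixes F :: "real \<Rightarrow> 'b::euclidean_space"
  assumes "F \<in> borel_measurable borel"
  shows "(\<integral>\<^sup>+ s. ennreal (2 * norm (F (2 * s + t))) \<partial>lborel) = (\<integral>\<^sup>+ s. ennreal (norm (F s)) \<partial>lborel)"
proof -
  have "(\<integral>\<^sup>+ s. ennreal (norm (F s)) \<partial>lborel) = ennreal \<bar>2\<bar> * (\<integral>\<^sup>+ s. ennreal (norm (F (t + 2 * s))) \<partial>lborel)"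
    using assms by (intro nn_integral_real_affine) auto
  also have "\<dots> = (\<integral>\<^sup>+ s. ennreal 2 * ennreal (norm (F (2 * s + t))) \<partial>lborel)"
    using assms by (subst nn_integral_cmult) (auto simp: add.commute)
  finally show ?thesis by (simp add: ennreal_mult)
qed

lemma curve_length_joinpaths_le:
  fixes g1 g2 :: "real \<Rightarrow> 'a::euclidean_space \<times> 'a"
  assumes "g1 piecewise_C1_differentiable_on {0..1}" "g2 piecewise_C1_differentiable_on {0..1}"
  shows "curve_length (g1 +++ g2) \<le> curve_length g1 + curve_length g2"
proof -
  obtain S1 F1 S2 F2 where d1: "piecewise_derivative g1 S1 F1" and d2: "piecewise_derivative g2 S2 F2"
    using assms by (metis piecewise_C1_imp_piecewise_derivative)
  note [measurable] = piecewise_derivativeD(2)[OF d1] piecewise_derivativeD(2)[OF d2]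
  have "curve_length (g1 +++ g2) = (\<integral>\<^sup>+ s. ennreal (norm (2 *\<^sub>R F1 (2 * s) + 2 *\<^sub>R F2 (2 * s - 1))) \<partial>lborel)"
    by (rule curve_length_piecewise_derivative[OF piecewise_derivative_joinpaths[OF d1 d2]])
  also have "\<dots> \<le> (\<integral>\<^sup>+ s. ennreal (2 * norm (F1 (2 * s + 0))) + ennreal (2 * norm (F2 (2 * s + -1))) \<partial>lborel)"
    by (intro nn_integral_mono)
       (auto simp flip: ennreal_plus intro!: ennreal_leI order.trans[OF norm_triangle_ineq])
  also have "\<dots> = (\<integral>\<^sup>+ s. ennreal (2 * norm (F1 (2 * s + 0))) \<partial>lborel) + (\<integral>\<^sup>+ s. ennreal (2 * norm (F2 (2 * s + -1))) \<partial>lborel)"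
    by (rule nn_integral_add) auto
  also have "\<dots> = curve_length g1 + curve_length g2"
    by (simp only: nn_integral_norm_rescale piecewise_derivativeD(2)[OF d1] piecewise_derivativeD(2)[OF d2]
        curve_length_piecewise_derivative[OF d1] curve_length_piecewise_derivative[OF d2])
  finally show ?thesis .
qed

lemma horizontal_curve_joinpaths:
  fixes g1 g2 :: "real \<Rightarrow> 'a::euclidean_space \<times> 'a"
  assumes h1: "horizontal_curve g1 p q" and h2: "horizontal_curve g2 q r"
  shows "horizontal_curve (g1 +++ g2) p r"
proof -
  have pc: "g1 piecewise_C1_differentiable_on {0..1}" "g2 piecewise_C1_differentiable_on {0..1}"
    and ends: "g1 0 = p" "g1 1 = q" "g2 0 = q" "g2 1 = r"
    using h1 h2 by (auto simp: horizontal_curve_def)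
  obtain S1 F1 S2 F2 where d1: "piecewise_derivative g1 S1 F1" and d2: "piecewise_derivative g2 S2 F2"
    using pc by (metis piecewise_C1_imp_piecewise_derivative)
  note d = piecewise_derivative_joinpaths[OF d1 d2]
  have hor1: "AE s in lborel. s \<in> {0..1} \<longrightarrow> snd (g1 s) \<bullet> fst (F1 s) = 0"
    using h1 horizontal_curve_iff_piecewise_derivative[OF d1] by blast
  have hor2: "AE s in lborel. s \<in> {0..1} \<longrightarrow> snd (g2 s) \<bullet> fst (F2 s) = 0"
    using h2 horizontal_curve_iff_piecewise_derivative[OF d2] by blast
  have "AE s in lborel. 0 + 2 * s \<in> {0..1} \<longrightarrow> snd (g1 (0 + 2 * s)) \<bullet> fst (F1 (0 + 2 * s)) = 0"
    and "AE s in lborel. -1 + 2 * s \<in> {0..1} \<longrightarrow> snd (g2 (-1 + 2 * s)) \<bullet> fst (F2 (-1 + 2 * s)) = 0"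
    by (rule AE_lborel_affine[OF hor1], simp, rule AE_lborel_affine[OF hor2], simp)
  then have "AE s in lborel. s \<in> {0..1} \<longrightarrow>
      snd ((g1 +++ g2) s) \<bullet> fst (2 *\<^sub>R F1 (2 * s) + 2 *\<^sub>R F2 (2 * s - 1)) = 0"
  proof eventually_elim
    case (elim s)
    consider "s < 1/2" | "s = 1/2" | "s > 1/2" by linarith
    then show ?case
    proof cases
      case 1
      then show ?thesis
        using elim piecewise_derivativeD(4)[OF d2, of "2 * s - 1"] by (auto simp: joinpaths_def)
    next
      case 2
      then have s: "2 * s = 1" "2 * s - 1 = 0" by simp_all
      show ?thesis using elim ends by (simp add: s joinpaths_def inner_add_right)
    next
      case 3
      then show ?thesis
        using elim piecewise_derivativeD(4)[OF d1, of "2 * s"] by (auto simp: joinpaths_def)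
    qed
  qed
  moreover have "(g1 +++ g2) piecewise_C1_differentiable_on {0..1}"
    using valid_path_join[of g1 g2] pc ends by (auto simp: valid_path_def pathfinish_def pathstart_def)
  moreover have "\<forall>s\<in>{0..1}. (g1 +++ g2) s \<in> cosphere"
    using h1 h2 by (auto simp: horizontal_curve_def joinpaths_def)
  moreover have "(g1 +++ g2) 0 = p" "(g1 +++ g2) 1 = r" using ends by (simp_all add: joinpaths_def)
  ultimately show ?thesis unfolding horizontal_curve_iff_piecewise_derivative[OF d] by blast
qed

lemma has_integral_abs_le_nn_integral_norm:
  fixes F :: "real \<Rightarrow> 'b::euclidean_space" and \<phi> :: "real \<Rightarrow> real"
  assumes F: "F \<in> borel_measurable borel" "\<And>s. s \<notin> {0..1} \<Longrightarrow> F s = 0"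
    and length: "(\<integral>\<^sup>+ s. ennreal (norm (F s)) \<partial>lborel) \<le> ennreal r" and "0 \<le> r"
    and \<phi>: "(\<phi> has_integral I) {0..1}"
    and bound: "AE s in lborel. s \<in> {0..1} \<longrightarrow> \<bar>\<phi> s\<bar> \<le> K * norm (F s)" and "0 \<le> K"
  shows "\<bar>I\<bar> \<le> K * r"
proof -
  obtain r' where r': "(\<integral>\<^sup>+ s. ennreal (norm (F s)) \<partial>lborel) = ennreal r'" "0 \<le> r'" "r' \<le> r"
    using length \<open>0 \<le> r\<close> by (cases "\<integral>\<^sup>+ s. ennreal (norm (F s)) \<partial>lborel") (auto simp: top_unique)
  have "((\<lambda>s. norm (F s)) has_integral r') UNIV"
    using F r' by (intro nn_integral_has_integral) auto
  then have "((\<lambda>s. if s \<in> {0..1} then norm (F s) else 0) has_integral r') UNIV"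
    by (rule has_integral_eq[rotated]) (use F(2) in auto)
  then have "((\<lambda>s. norm (F s)) has_integral r') {0..1}"
    by (simp only: has_integral_restrict_UNIV)
  then have KF: "((\<lambda>s. K * norm (F s)) has_integral K * r') {0..1}"
    by (rule has_integral_mult_right)
  from bound obtain N where N: "{s \<in> space lborel. \<not> (s \<in> {0..1} \<longrightarrow> \<bar>\<phi> s\<bar> \<le> K * norm (F s))} \<subseteq> N"
    "N \<in> null_sets lborel"
    by (auto elim!: AE_E simp: null_sets_def)
  have "negligible N"
    using N(2) unfolding negligible_iff_null_sets by (rule null_sets_completionI)
  define \<psi> where "\<psi> s = (if s \<in> N then 0 else \<phi> s)" for s
  have \<psi>: "(\<psi> has_integral I) {0..1}"
    by (rule has_integral_spike[OF \<open>negligible N\<close> _ \<phi>]) (simp add: \<psi>_def)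
  have bound\<psi>: "\<bar>\<psi> s\<bar> \<le> K * norm (F s)" if "s \<in> {0..1}" for s
    using N(1) that \<open>0 \<le> K\<close> by (auto simp: \<psi>_def)
  have "I \<le> K * r'"
    by (rule has_integral_le[OF \<psi> KF]) (use bound\<psi> in \<open>simp add: abs_le_iff\<close>)
  moreover have "- I \<le> K * r'"
    by (rule has_integral_le[OF has_integral_neg[OF \<psi>] KF]) (use bound\<psi> in \<open>simp add: abs_le_iff\<close>)
  moreover have "K * r' \<le> K * r" using r' \<open>0 \<le> K\<close> by (intro mult_left_mono)
  ultimately show ?thesis by linarith
qed

lemma piecewise_derivative_has_integral:
  fixes g :: "real \<Rightarrow> 'b::banach"
  assumes "piecewise_derivative g S F" "continuous_on {0..1} g" "t \<in> {0..1}"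
  shows "(F has_integral (g t - g 0)) {0..t}"
proof (rule fundamental_theorem_of_calculus_interior_strong[OF piecewise_derivativeD(1)[OF assms(1)]])
  show "continuous_on {0..t} g"
    by (rule continuous_on_subset[OF assms(2)]) (use assms(3) in auto)
  fix s assume "s \<in> {0<..<t} - S"
  then show "(g has_vector_derivative F s) (at s)"
    using assms(3) by (intro piecewise_derivativeD(3)[OF assms(1)]) auto
qed (use assms(3) in auto)

lemma norm_displacement_le_curve_length:
  fixes g :: "real \<Rightarrow> 'a::euclidean_space \<times> 'a"
  assumes pc: "g piecewise_C1_differentiable_on {0..1}"
    and length: "curve_length g \<le> ennreal r" and "0 \<le> r" and t: "t \<in> {0..1}"
  shows "norm (g t - g 0) \<le> r"
proof (cases "g t = g 0")
  case False
  obtain S F where d: "piecewise_derivative g S F"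
    using pc by (rule piecewise_C1_imp_piecewise_derivative)
  define u where "u = sgn (g t - g 0)"
  have "((\<lambda>s. u \<bullet> F s) has_integral u \<bullet> (g t - g 0)) {0..t}"
    using has_integral_linear[OF piecewise_derivative_has_integral[OF d _ t] bounded_linear_inner_right[of u]]
      pc by (simp add: o_def piecewise_C1_differentiable_on_def)
  then have "((\<lambda>s. if s \<in> {0..t} then u \<bullet> F s else 0) has_integral u \<bullet> (g t - g 0)) {0..1}"
    using t by (subst has_integral_restrict) auto
  moreover have "\<bar>if s \<in> {0..t} then u \<bullet> F s else 0\<bar> \<le> 1 * norm (F s)" for s
    using Cauchy_Schwarz_ineq2[of u "F s"] False by (auto simp: u_def norm_sgn)
  ultimately have "\<bar>u \<bullet> (g t - g 0)\<bar> \<le> 1 * r"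
    using piecewise_derivativeD(2,4)[OF d] length \<open>0 \<le> r\<close>
    by (intro has_integral_abs_le_nn_integral_norm[of F])
       (auto simp: curve_length_piecewise_derivative[OF d] intro!: AE_I2)
  moreover have "u \<bullet> (g t - g 0) = norm (g t - g 0)"
    using False by (simp add: u_def sgn_div_norm dot_square_norm power2_eq_square)
  ultimately show ?thesis by simp
qed (use \<open>0 \<le> r\<close> in simp)

lemma horizontal_curve_displacement_bounds:
  fixes g :: "real \<Rightarrow> 'a::euclidean_space \<times> 'a"
  assumes h: "horizontal_curve g (x, \<omega>) (y, \<nu>)"
    and length: "curve_length g \<le> ennreal r" and r: "0 \<le> r"
  shows "norm (y - x) \<le> r" "norm (\<nu> - \<omega>) \<le> r" "\<bar>(y - x) \<bullet> \<omega>\<bar> \<le> r\<^sup>2"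
proof -
  have pc: "g piecewise_C1_differentiable_on {0..1}" and g0: "g 0 = (x, \<omega>)" and g1: "g 1 = (y, \<nu>)"
    using h by (auto simp: horizontal_curve_def)
  note displacement = norm_displacement_le_curve_length[OF pc length r]
  show "norm (y - x) \<le> r" "norm (\<nu> - \<omega>) \<le> r"
    using displacement[of 1] norm_fst_le[of "y - x" "\<nu> - \<omega>"] norm_snd_le[of "\<nu> - \<omega>" "y - x"] g0 g1
    by auto
  obtain S F where d: "piecewise_derivative g S F"
    using pc by (rule piecewise_C1_imp_piecewise_derivative)
  have integral: "((\<lambda>s. \<omega> \<bullet> fst (F s)) has_integral \<omega> \<bullet> (y - x)) {0..1}"
    using has_integral_linear[OF piecewise_derivative_has_integral[OF d _, of 1]
        bounded_linear_compose[OF bounded_linear_inner_right bounded_linear_fst, of \<omega>]]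
      pc g0 g1 by (simp add: o_def piecewise_C1_differentiable_on_def)
  have "\<bar>\<omega> \<bullet> fst (F s)\<bar> \<le> r * norm (F s)"
    if s: "s \<in> {0..1}" "snd (g s) \<bullet> fst (F s) = 0" for s
  proof -
    have "norm (snd (g s - g 0)) \<le> norm (g s - g 0)"
      using norm_snd_le[of "snd (g s - g 0)" "fst (g s - g 0)"] by (simp only: prod.collapse)
    then have "norm (snd (g s - g 0)) \<le> r" using displacement[OF s(1)] by linarith
    then have close: "norm (\<omega> - snd (g s)) \<le> r"
      using g0 by (simp add: norm_minus_commute)
    have "\<omega> \<bullet> fst (F s) = (\<omega> - snd (g s)) \<bullet> fst (F s)"
      using s(2) by (simp add: inner_diff_left)
    then have "\<bar>\<omega> \<bullet> fst (F s)\<bar> \<le> norm (\<omega> - snd (g s)) * norm (fst (F s))"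
      using Cauchy_Schwarz_ineq2[of "\<omega> - snd (g s)" "fst (F s)"] by simp
    also have "\<dots> \<le> r * norm (F s)"
      using close r norm_fst_le[of "fst (F s)" "snd (F s)"] by (intro mult_mono) auto
    finally show ?thesis .
  qed
  moreover have "AE s in lborel. s \<in> {0..1} \<longrightarrow> snd (g s) \<bullet> fst (F s) = 0"
    using h horizontal_curve_iff_piecewise_derivative[OF d] by blast
  ultimately have "AE s in lborel. s \<in> {0..1} \<longrightarrow> \<bar>\<omega> \<bullet> fst (F s)\<bar> \<le> r * norm (F s)"
    by (auto elim!: AE_mp)
  then have "\<bar>\<omega> \<bullet> (y - x)\<bar> \<le> r * r"
    using integral piecewise_derivativeD(2,4)[OF d] length r
    by (intro has_integral_abs_le_nn_integral_norm[of F]) (auto simp: curve_length_piecewise_derivative[OF d])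
  then show "\<bar>(y - x) \<bullet> \<omega>\<bar> \<le> r\<^sup>2" by (simp add: inner_commute power2_eq_square)
qed

section \<open>Reachability by short horizontal curves\<close>

definition sR_reachable :: "('a::euclidean_space \<times> 'a) \<Rightarrow> ('a \<times> 'a) \<Rightarrow> real \<Rightarrow> bool" where
  "sR_reachable p q L \<longleftrightarrow> (\<exists>g. horizontal_curve g p q \<and> curve_length g \<le> ennreal L)"

lemma sR_reachable_trans:
  assumes "sR_reachable p q L1" "sR_reachable q r L2" "0 \<le> L1" "0 \<le> L2"
  shows "sR_reachable p r (L1 + L2)"
proof -
  obtain g1 g2 where g1: "horizontal_curve g1 p q" "curve_length g1 \<le> ennreal L1"
    and g2: "horizontal_curve g2 q r" "curve_length g2 \<le> ennreal L2"
    using assms(1,2) by (auto simp: sR_reachable_def)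
  have "curve_length (g1 +++ g2) \<le> curve_length g1 + curve_length g2"
    using g1(1) g2(1) by (intro curve_length_joinpaths_le) (auto simp: horizontal_curve_def)
  also have "\<dots> \<le> ennreal L1 + ennreal L2" using g1(2) g2(2) by (rule add_mono)
  also have "\<dots> = ennreal (L1 + L2)" using assms(3,4) by (simp add: ennreal_plus)
  finally show ?thesis
    unfolding sR_reachable_def using horizontal_curve_joinpaths[OF g1(1) g2(1)] by blast
qed

lemma sR_reachable_mono: "sR_reachable p q L \<Longrightarrow> L \<le> L' \<Longrightarrow> sR_reachable p q L'"
  unfolding sR_reachable_def by (meson ennreal_leI order.trans)

lemma sR_reachable_translate:
  fixes x v \<xi> :: "'a::euclidean_space"
  assumes "norm \<xi> = 1" "v \<bullet> \<xi> = 0"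
  shows "sR_reachable (x, \<xi>) (x + v, \<xi>) (norm v)"
  unfolding sR_reachable_def using horizontal_segment[OF assms] by blast

lemma sR_reachable_refl:
  fixes x \<xi> :: "'a::euclidean_space"
  assumes "norm \<xi> = 1"
  shows "sR_reachable (x, \<xi>) (x, \<xi>) 0"
  using sR_reachable_translate[OF assms, of 0 x] by simp

lemma sR_reachable_rotate:
  fixes x a b :: "'a::euclidean_space"
  assumes "norm a = 1" "norm b = 1" "a \<bullet> b = 0"
  shows "sR_reachable (x, cos \<alpha> *\<^sub>R a + sin \<alpha> *\<^sub>R b) (x, cos (\<alpha> + \<beta>) *\<^sub>R a + sin (\<alpha> + \<beta>) *\<^sub>R b) \<bar>\<beta>\<bar>"
  unfolding sR_reachable_def using horizontal_rotation[OF assms] by blast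

lemma sin_ge_half_self:
  fixes z :: real
  assumes "0 \<le> z" "z \<le> 1"
  shows "z / 2 \<le> sin z"
proof -
  have "(\<lambda>z. sin z - z / 2) 0 \<le> (\<lambda>z. sin z - z / 2) z"
  proof (rule DERIV_nonneg_imp_nondecreasing[OF assms(1)])
    fix x assume x: "0 \<le> x" "x \<le> z"
    have "cos (pi / 3) \<le> cos x"
      using x assms pi_gt3 by (subst cos_mono_le_eq) auto
    then show "\<exists>y. ((\<lambda>z. sin z - z / 2) has_real_derivative y) (at x) \<and> 0 \<le> y"
      by (intro exI[of _ "cos x - 1/2"]) (auto simp: cos_60 intro!: derivative_eq_intros)
  qed
  then show ?thesis by simp
qed

lemma exists_unit_orthogonal:
  fixes d :: "'a::euclidean_space"
  assumes "DIM('a) \<ge> 2"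
  obtains w where "norm w = 1" "w \<bullet> d = 0"
proof -
  obtain b1 :: 'a where b1: "b1 \<in> Basis" using nonempty_Basis by blast
  have "card (Basis - {b1}) \<ge> 1" using assms b1 by (simp add: card_Diff_singleton)
  then have "Basis - {b1} \<noteq> {}" by (metis card.empty not_one_le_zero)
  then obtain b2 where b2: "b2 \<in> Basis" "b2 \<noteq> b1" by blast
  define v where "v = (d \<bullet> b2) *\<^sub>R b1 - (d \<bullet> b1) *\<^sub>R b2"
  have vd: "v \<bullet> d = 0" by (simp add: v_def inner_diff_left inner_commute[of b1 d] inner_commute[of b2 d])
  show ?thesis
  proof (cases "v = 0")
    case False
    then show ?thesis using vd by (intro that[of "v /\<^sub>R norm v"]) auto
  next
    case True
    have "d \<bullet> b1 = - (v \<bullet> b2)"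
      using b1 b2 by (simp add: v_def inner_diff_left inner_Basis)
    with True have "d \<bullet> b1 = 0" by simp
    then show ?thesis using b1 by (intro that[of b1]) (auto simp: inner_commute)
  qed
qed

lemma sR_reachable_parallelogram:
  fixes x \<omega> u :: "'a::euclidean_space"
  assumes \<omega>u: "norm \<omega> = 1" "norm u = 1" "\<omega> \<bullet> u = 0" and t: "0 \<le> t"
  shows "sR_reachable (x, \<omega>) (x - (t * sin \<theta>) *\<^sub>R \<omega>, \<omega>) (2 * \<bar>\<theta>\<bar> + 2 * t)"
proof -
  \<comment> \<open>Tilt the fibre by \<open>\<theta>\<close> towards \<open>u\<close>, move horizontally by \<open>t\<close>, tilt back, and move along \<open>u\<close>
     to close the parallelogram.\<close>
  define \<omega>' where "\<omega>' = cos \<theta> *\<^sub>R \<omega> + sin \<theta> *\<^sub>R u"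
  define v where "v = t *\<^sub>R (cos \<theta> *\<^sub>R u - sin \<theta> *\<^sub>R \<omega>)"
  define v' where "v' = - (t * cos \<theta>) *\<^sub>R u"
  have u\<omega>: "u \<bullet> \<omega> = 0" using \<omega>u(3) by (simp add: inner_commute)
  have "norm (cos \<theta> *\<^sub>R u + (- sin \<theta>) *\<^sub>R \<omega>) = 1"
    using norm_orthonormal_combination[OF \<omega>u(2,1) u\<omega>, of "cos \<theta>" "- sin \<theta>"] by simp
  then have unit: "norm \<omega>' = 1" "norm (cos \<theta> *\<^sub>R u - sin \<theta> *\<^sub>R \<omega>) = 1"
    using norm_orthonormal_combination[OF \<omega>u] by (simp_all add: \<omega>'_def)
  have r1: "sR_reachable (x, \<omega>) (x, \<omega>') \<bar>\<theta>\<bar>"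
    using sR_reachable_rotate[OF \<omega>u, of x 0 \<theta>] by (simp add: \<omega>'_def)
  have r2: "sR_reachable (x, \<omega>') (x + v, \<omega>') t"
  proof -
    have "v \<bullet> \<omega>' = 0"
      using \<omega>u u\<omega> by (simp add: v_def \<omega>'_def inner_diff_left inner_add_right algebra_simps dot_square_norm)
    moreover have "norm v = t" using unit(2) t by (simp add: v_def)
    ultimately show ?thesis using sR_reachable_translate[OF unit(1), of v x] by simp
  qed
  have r3: "sR_reachable (x + v, \<omega>') (x + v, \<omega>) \<bar>\<theta>\<bar>"
    using sR_reachable_rotate[OF \<omega>u, of "x + v" \<theta> "- \<theta>"] by (simp add: \<omega>'_def)
  have r4: "sR_reachable (x + v, \<omega>) (x + v + v', \<omega>) t"
  proof (rule sR_reachable_mono)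
    show "sR_reachable (x + v, \<omega>) (x + v + v', \<omega>) (norm v')"
      using sR_reachable_translate[OF \<omega>u(1), of v' "x + v"] u\<omega> by (simp add: v'_def)
    have "norm v' = t * \<bar>cos \<theta>\<bar>" using \<omega>u(2) t by (simp add: v'_def abs_mult)
    then show "norm v' \<le> t" using mult_left_le[OF abs_cos_le_one t] by simp
  qed
  have reach: "sR_reachable (x, \<omega>) (x + v + v', \<omega>) (\<bar>\<theta>\<bar> + t + \<bar>\<theta>\<bar> + t)"
    using t by (intro sR_reachable_trans[OF sR_reachable_trans[OF sR_reachable_trans[OF r1 r2] r3] r4]) auto
  have "x + v + v' = x - (t * sin \<theta>) *\<^sub>R \<omega>"
  proof -
    have "v + v' = - (t * sin \<theta>) *\<^sub>R \<omega>" by (simp add: v_def v'_def algebra_simps)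
    then show ?thesis by (simp only: add.assoc) simp
  qed
  with reach have "sR_reachable (x, \<omega>) (x - (t * sin \<theta>) *\<^sub>R \<omega>, \<omega>) (\<bar>\<theta>\<bar> + t + \<bar>\<theta>\<bar> + t)"
    by (simp only:)
  then show ?thesis by (rule sR_reachable_mono) linarith
qed

lemma sR_reachable_vertical:
  fixes x \<omega> u :: "'a::euclidean_space"
  assumes \<omega>u: "norm \<omega> = 1" "norm u = 1" "\<omega> \<bullet> u = 0" and h: "\<bar>h\<bar> \<le> 1"
  shows "sR_reachable (x, \<omega>) (x + h *\<^sub>R \<omega>, \<omega>) (6 * sqrt \<bar>h\<bar>)"
proof (cases "h = 0")
  case True
  then show ?thesis using sR_reachable_refl[OF \<omega>u(1)] by simp
next
  case False
  define z where "z = sqrt \<bar>h\<bar>"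
  have z: "0 < z" "z \<le> 1" "z * z = \<bar>h\<bar>" using False h by (auto simp: z_def)
  have sin_z: "z / 2 \<le> sin z" "0 < sin z" using sin_ge_half_self[of z] z by auto
  define \<theta> where "\<theta> = (if h > 0 then - z else z)"
  define t where "t = \<bar>h\<bar> / sin z"
  have t: "0 \<le> t" "t \<le> 2 * z"
  proof -
    show "0 \<le> t" using sin_z by (simp add: t_def)
    have "t \<le> z * z / (z / 2)" using sin_z z by (simp only: t_def) (intro divide_left_mono, auto)
    also have "z * z / (z / 2) = 2 * z" using z(1) by simp
    finally show "t \<le> 2 * z" .
  qed
  have "t * sin \<theta> = - h"
  proof (cases "h > 0")
    case True
    then show ?thesis using sin_z(2) by (simp add: \<theta>_def t_def)
  next
    case False
    then show ?thesis using sin_z(2) \<open>h \<noteq> 0\<close> by (simp add: \<theta>_def t_def)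
  qed
  then have "x - (t * sin \<theta>) *\<^sub>R \<omega> = x + h *\<^sub>R \<omega>" by simp
  moreover have "\<bar>\<theta>\<bar> = z" using z(1) by (simp add: \<theta>_def)
  ultimately have "sR_reachable (x, \<omega>) (x + h *\<^sub>R \<omega>, \<omega>) (2 * z + 2 * t)"
    using sR_reachable_parallelogram[OF \<omega>u t(1), of x \<theta>] by (simp only:)
  then show ?thesis by (rule sR_reachable_mono) (use t in \<open>simp add: z_def\<close>)
qed

lemma unit_vector_polar_decomposition:
  fixes \<omega> \<nu> :: "'a::euclidean_space"
  assumes "DIM('a) \<ge> 2" and unit: "norm \<omega> = 1" "norm \<nu> = 1"
  obtains \<phi> w where "norm w = 1" "\<omega> \<bullet> w = 0" "\<nu> = cos \<phi> *\<^sub>R \<omega> + sin \<phi> *\<^sub>R w"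
    "0 \<le> \<phi>" "\<phi> \<le> pi" "cos \<phi> = \<nu> \<bullet> \<omega>" "sin \<phi> = norm (\<nu> - (\<nu> \<bullet> \<omega>) *\<^sub>R \<omega>)"
proof -
  define c where "c = \<nu> \<bullet> \<omega>"
  define q where "q = \<nu> - c *\<^sub>R \<omega>"
  have c: "\<bar>c\<bar> \<le> 1" using Cauchy_Schwarz_ineq2[of \<nu> \<omega>] unit by (simp add: c_def)
  have q\<omega>: "\<omega> \<bullet> q = 0" using unit by (simp add: q_def c_def inner_diff_right inner_commute dot_square_norm)
  have "(norm q)\<^sup>2 = q \<bullet> q" by (simp add: dot_square_norm)
  also have "\<dots> = \<nu> \<bullet> \<nu> - 2 * c * (\<nu> \<bullet> \<omega>) + c\<^sup>2 * (\<omega> \<bullet> \<omega>)"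
    by (simp add: q_def inner_diff_left inner_diff_right inner_commute power2_eq_square algebra_simps)
  also have "\<dots> = 1 - c\<^sup>2" using unit by (simp add: c_def dot_square_norm power2_eq_square)
  finally have norm_q: "norm q = sqrt (1 - c\<^sup>2)" by (simp add: real_sqrt_unique)
  obtain u where u: "norm u = 1" "\<omega> \<bullet> u = 0"
    using exists_unit_orthogonal[OF assms(1), of \<omega>] by (auto simp: inner_commute)
  show ?thesis
  proof (cases "q = 0")
    case True
    then have "c\<^sup>2 = 1" using norm_q c by (simp add: abs_square_le_1)
    then consider "c = 1" | "c = -1" by (auto simp: power2_eq_1_iff)
    then show ?thesis
    proof cases
      case 1
      then have "\<nu> = \<omega>" using True by (simp add: q_def)
      then show ?thesis using u unit by (intro that[of u 0]) (auto simp: dot_square_norm)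
    next
      case 2
      have "\<nu> = c *\<^sub>R \<omega>" using True by (simp add: q_def)
      then have "\<nu> = - \<omega>" using 2 by simp
      then show ?thesis using u unit by (intro that[of u pi]) (auto simp: dot_square_norm)
    qed
  next
    case False
    have "cos (arccos c) = c" "sin (arccos c) = norm q"
      using c norm_q by (simp_all add: sin_arccos_abs)
    moreover have "0 \<le> arccos c" "arccos c \<le> pi" using c arccos_bounded by auto
    moreover have "\<nu> = c *\<^sub>R \<omega> + norm q *\<^sub>R (q /\<^sub>R norm q)" using False by (simp add: q_def)
    moreover have "norm (q /\<^sub>R norm q) = 1" "\<omega> \<bullet> (q /\<^sub>R norm q) = 0" using False q\<omega> by simp_all
    ultimately show ?thesis
      using False by (intro that[of "q /\<^sub>R norm q" "arccos c", folded c_def q_def]) simp_all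
  qed
qed

lemma angle_le_twice_sin:
  assumes "0 \<le> \<phi>" "\<phi> \<le> pi / 2" "sin \<phi> \<le> 1 / 2"
  shows "\<phi> \<le> 2 * sin \<phi>"
proof -
  have "\<phi> \<le> 1"
  proof (rule ccontr)
    assume "\<not> \<phi> \<le> 1"
    then have "sin 1 < sin \<phi>" using assms(2) pi_gt3 by (subst sin_mono_less_eq) auto
    moreover have "1 / 2 \<le> sin (1::real)" using sin_ge_half_self[of 1] by simp
    ultimately show False using assms(3) by simp
  qed
  then show ?thesis using sin_ge_half_self[OF assms(1)] by simp
qed

lemma sR_reachable_turn:
  fixes x \<omega> \<nu> :: "'a::euclidean_space"
  assumes "DIM('a) \<ge> 2" "norm \<omega> = 1" "norm \<nu> = 1"
  shows "sR_reachable (x, \<omega>) (x, \<nu>) pi"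
proof -
  obtain \<phi> w where \<phi>: "norm w = 1" "\<omega> \<bullet> w = 0" "\<nu> = cos \<phi> *\<^sub>R \<omega> + sin \<phi> *\<^sub>R w" "0 \<le> \<phi>" "\<phi> \<le> pi"
    using unit_vector_polar_decomposition[OF assms] by blast
  have "sR_reachable (x, \<omega>) (x, \<nu>) \<phi>"
    using sR_reachable_rotate[OF assms(2) \<phi>(1,2), of x 0 \<phi>] \<phi>(3,4) by simp
  then show ?thesis using \<phi>(5) by (rule sR_reachable_mono)
qed

lemma sR_reachable_turn_small:
  fixes x \<omega> \<nu> :: "'a::euclidean_space"
  assumes "DIM('a) \<ge> 2" "norm \<omega> = 1" "norm \<nu> = 1"
    and "0 \<le> \<nu> \<bullet> \<omega>" "norm (\<nu> - (\<nu> \<bullet> \<omega>) *\<^sub>R \<omega>) \<le> 1 / 2"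
  shows "sR_reachable (x, \<omega>) (x, \<nu>) (2 * norm (\<nu> - (\<nu> \<bullet> \<omega>) *\<^sub>R \<omega>))"
proof -
  obtain \<phi> w where \<phi>: "norm w = 1" "\<omega> \<bullet> w = 0" "\<nu> = cos \<phi> *\<^sub>R \<omega> + sin \<phi> *\<^sub>R w" "0 \<le> \<phi>" "\<phi> \<le> pi"
    "cos \<phi> = \<nu> \<bullet> \<omega>" "sin \<phi> = norm (\<nu> - (\<nu> \<bullet> \<omega>) *\<^sub>R \<omega>)"
    using unit_vector_polar_decomposition[OF assms(1-3)] by blast
  have "\<phi> \<le> pi / 2"
  proof (rule ccontr)
    assume "\<not> \<phi> \<le> pi / 2"
    then have "cos \<phi> < cos (pi / 2)" using \<phi>(4,5) by (subst cos_mono_less_eq) auto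
    then show False using \<phi>(6) assms(4) by simp
  qed
  then have "\<phi> \<le> 2 * norm (\<nu> - (\<nu> \<bullet> \<omega>) *\<^sub>R \<omega>)"
    using angle_le_twice_sin[of \<phi>] \<phi>(4,7) assms(5) by simp
  moreover have "sR_reachable (x, \<omega>) (x, \<nu>) \<phi>"
    using sR_reachable_rotate[OF assms(2) \<phi>(1,2), of x 0 \<phi>] \<phi>(3,4) by simp
  ultimately show ?thesis using sR_reachable_mono by blast
qed

lemma sR_reachable_near:
  fixes x y \<omega> \<nu> :: "'a::euclidean_space"
  assumes "DIM('a) \<ge> 2" and unit: "norm \<omega> = 1" "norm \<nu> = 1" and \<delta>: "0 < \<delta>" "\<delta> \<le> 1/2"
    and vertical: "\<bar>(y - x) \<bullet> \<omega>\<bar> < \<delta>\<^sup>2"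
    and horizontal: "norm ((y - x) - ((y - x) \<bullet> \<omega>) *\<^sub>R \<omega>) < \<delta>"
    and fibre: "0 \<le> \<nu> \<bullet> \<omega>" "norm (\<nu> - (\<nu> \<bullet> \<omega>) *\<^sub>R \<omega>) < \<delta>"
  shows "sR_reachable (x, \<omega>) (y, \<nu>) (9 * \<delta>)"
proof -
  define h where "h = (y - x) \<bullet> \<omega>"
  define p where "p = (y - x) - h *\<^sub>R \<omega>"
  obtain u where u: "norm u = 1" "u \<bullet> \<omega> = 0" using exists_unit_orthogonal[OF assms(1)] .
  have "\<delta>\<^sup>2 \<le> 1" using \<delta> by (intro power_le_one) auto
  then have "\<bar>h\<bar> \<le> 1" using vertical unfolding h_def by linarith
  then have r1: "sR_reachable (x, \<omega>) (x + h *\<^sub>R \<omega>, \<omega>) (6 * sqrt \<bar>h\<bar>)"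
    using u by (intro sR_reachable_vertical[OF unit(1) u(1)]) (simp add: inner_commute)
  have "sqrt \<bar>h\<bar> \<le> sqrt (\<delta>\<^sup>2)" using vertical by (intro real_sqrt_le_mono) (simp add: h_def)
  then have sqrt_h: "sqrt \<bar>h\<bar> \<le> \<delta>" using \<delta> by simp
  have "p \<bullet> \<omega> = 0" using unit by (simp add: p_def h_def inner_diff_left dot_square_norm)
  then have r2: "sR_reachable (x + h *\<^sub>R \<omega>, \<omega>) (y, \<omega>) (norm p)"
    using sR_reachable_translate[OF unit(1), of p "x + h *\<^sub>R \<omega>"] by (simp add: p_def)
  have r3: "sR_reachable (y, \<omega>) (y, \<nu>) (2 * norm (\<nu> - (\<nu> \<bullet> \<omega>) *\<^sub>R \<omega>))"
    using fibre \<delta> by (intro sR_reachable_turn_small[OF assms(1) unit]) auto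
  have "sR_reachable (x, \<omega>) (y, \<nu>) (6 * sqrt \<bar>h\<bar> + norm p + 2 * norm (\<nu> - (\<nu> \<bullet> \<omega>) *\<^sub>R \<omega>))"
    by (intro sR_reachable_trans[OF sR_reachable_trans[OF r1 r2] r3]) auto
  then show ?thesis
    by (rule sR_reachable_mono) (use sqrt_h horizontal fibre(2) in \<open>simp add: p_def h_def\<close>)
qed

lemma sR_reachable_far:
  fixes x y \<omega> \<nu> :: "'a::euclidean_space"
  assumes "DIM('a) \<ge> 2" "norm \<omega> = 1" "norm \<nu> = 1"
  shows "sR_reachable (x, \<omega>) (y, \<nu>) (norm (y - x) + 2 * pi)"
proof -
  obtain w where w: "norm w = 1" "w \<bullet> (y - x) = 0" using exists_unit_orthogonal[OF assms(1)] .
  have r1: "sR_reachable (x, \<omega>) (x, w) pi" by (rule sR_reachable_turn[OF assms(1,2) w(1)])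
  have r2: "sR_reachable (x, w) (y, w) (norm (y - x))"
    using sR_reachable_translate[OF w(1), of "y - x" x] w(2) by (simp add: inner_commute)
  have r3: "sR_reachable (y, w) (y, \<nu>) pi" by (rule sR_reachable_turn[OF assms(1) w(1) assms(3)])
  have "sR_reachable (x, \<omega>) (y, \<nu>) (pi + norm (y - x) + pi)"
    by (intro sR_reachable_trans[OF sR_reachable_trans[OF r1 r2] r3]) auto
  then show ?thesis by (rule sR_reachable_mono) simp
qed

section \<open>Sub-Riemannian balls\<close>

lemma mem_sR_ball_iff:
  "q \<in> sR_ball p \<tau> \<longleftrightarrow> (\<exists>g. horizontal_curve g p q \<and> curve_length g < ennreal \<tau>)"
  by (simp add: sR_ball_def sR_dist_def INF_less_iff)

lemma sR_reachable_imp_mem_sR_ball: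
  assumes "sR_reachable p q L" "0 \<le> L" "L < \<tau>"
  shows "q \<in> sR_ball p \<tau>"
proof -
  obtain g where g: "horizontal_curve g p q" "curve_length g \<le> ennreal L"
    using assms(1) by (auto simp: sR_reachable_def)
  moreover have "ennreal L < ennreal \<tau>" using assms(2,3) by (intro ennreal_lessI) auto
  ultimately show ?thesis unfolding mem_sR_ball_iff by (meson order_le_less_trans)
qed

lemma mem_sR_ball_imp_sR_reachable:
  assumes "q \<in> sR_ball p \<tau>"
  obtains L where "sR_reachable p q L" "0 \<le> L" "L < \<tau>"
proof -
  obtain g where g: "horizontal_curve g p q" "curve_length g < ennreal \<tau>"
    using assms mem_sR_ball_iff by blast
  then obtain L where "curve_length g = ennreal L" "0 \<le> L"
    by (cases "curve_length g") auto
  with g show ?thesis by (intro that[of L]) (auto simp: sR_reachable_def ennreal_less_iff)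
qed

lemma sR_ball_subset_cosphere: "sR_ball p \<tau> \<subseteq> cosphere"
proof
  fix q assume "q \<in> sR_ball p \<tau>"
  then obtain g where "horizontal_curve g p q" unfolding mem_sR_ball_iff by blast
  then show "q \<in> cosphere" unfolding horizontal_curve_def by force
qed

lemma sR_ball_mono: "\<tau>1 \<le> \<tau>2 \<Longrightarrow> sR_ball p \<tau>1 \<subseteq> sR_ball p \<tau>2"
  unfolding sR_ball_def by (auto intro: order_less_le_trans ennreal_leI)

lemma mem_sR_ball_displacement_bounds:
  fixes x \<omega> y \<nu> :: "'a::euclidean_space"
  assumes "(y, \<nu>) \<in> sR_ball (x, \<omega>) \<tau>"
  shows "norm \<nu> = 1" "norm (y - x) \<le> \<tau>" "norm (\<nu> - \<omega>) \<le> \<tau>" "\<bar>(y - x) \<bullet> \<omega>\<bar> \<le> \<tau>\<^sup>2"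
proof -
  have "(y, \<nu>) \<in> cosphere" using assms sR_ball_subset_cosphere by blast
  then show "norm \<nu> = 1" by (simp add: cosphere_def)
  obtain L g where L: "0 \<le> L" "L < \<tau>"
    and g: "horizontal_curve g (x, \<omega>) (y, \<nu>)" "curve_length g \<le> ennreal L"
    using assms by (auto elim!: mem_sR_ball_imp_sR_reachable simp: sR_reachable_def)
  note bounds = horizontal_curve_displacement_bounds[OF g L(1)]
  show "norm (y - x) \<le> \<tau>" "norm (\<nu> - \<omega>) \<le> \<tau>" using bounds(1,2) L by auto
  have "L\<^sup>2 \<le> \<tau>\<^sup>2" using L by (intro power_mono) auto
  then show "\<bar>(y - x) \<bullet> \<omega>\<bar> \<le> \<tau>\<^sup>2" using bounds(3) by linarith
qed

lemma norm_orthogonal_projection_le: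
  fixes v \<omega> :: "'a::real_inner"
  assumes "norm \<omega> = 1"
  shows "norm (v - (v \<bullet> \<omega>) *\<^sub>R \<omega>) \<le> norm v"
proof -
  have "(norm (v - (v \<bullet> \<omega>) *\<^sub>R \<omega>))\<^sup>2 = (v - (v \<bullet> \<omega>) *\<^sub>R \<omega>) \<bullet> (v - (v \<bullet> \<omega>) *\<^sub>R \<omega>)"
    by (simp add: dot_square_norm)
  also have "\<dots> = v \<bullet> v - 2 * (v \<bullet> \<omega>) * (v \<bullet> \<omega>) + (v \<bullet> \<omega>)\<^sup>2 * (\<omega> \<bullet> \<omega>)"
    by (simp add: inner_diff_left inner_diff_right inner_commute power2_eq_square algebra_simps)
  also have "\<dots> = (norm v)\<^sup>2 - (v \<bullet> \<omega>)\<^sup>2"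
    using assms by (simp add: dot_square_norm power2_eq_square)
  finally have "(norm (v - (v \<bullet> \<omega>) *\<^sub>R \<omega>))\<^sup>2 \<le> (norm v)\<^sup>2" by simp
  then show ?thesis by (simp add: power2_le_iff_abs_le)
qed

lemma sR_reachable_nearby:
  fixes y \<nu> y' \<nu>' :: "'a::euclidean_space"
  assumes "DIM('a) \<ge> 2" and unit: "norm \<nu> = 1" "norm \<nu>' = 1" and \<delta>: "0 < \<delta>" "\<delta> \<le> 1/2"
    and close: "norm (y' - y) < \<delta>\<^sup>2" "norm (\<nu>' - \<nu>) < \<delta>\<^sup>2"
  shows "sR_reachable (y, \<nu>) (y', \<nu>') (9 * \<delta>)"
proof (rule sR_reachable_near[OF assms(1) unit \<delta>])
  have "\<delta>\<^sup>2 \<le> \<delta>" using \<delta> by (simp add: power2_eq_square mult_left_le_one_le)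
  have "\<bar>(y' - y) \<bullet> \<nu>\<bar> \<le> norm (y' - y)" using Cauchy_Schwarz_ineq2[of "y' - y" \<nu>] unit by simp
  then show "\<bar>(y' - y) \<bullet> \<nu>\<bar> < \<delta>\<^sup>2" using close by linarith
  show "norm (y' - y - ((y' - y) \<bullet> \<nu>) *\<^sub>R \<nu>) < \<delta>"
    using norm_orthogonal_projection_le[OF unit(1), of "y' - y"] close \<open>\<delta>\<^sup>2 \<le> \<delta>\<close> by linarith
  have "\<nu>' - (\<nu>' \<bullet> \<nu>) *\<^sub>R \<nu> = (\<nu>' - \<nu>) - ((\<nu>' - \<nu>) \<bullet> \<nu>) *\<^sub>R \<nu>"
    using unit by (simp add: inner_diff_left dot_square_norm algebra_simps)
  then show "norm (\<nu>' - (\<nu>' \<bullet> \<nu>) *\<^sub>R \<nu>) < \<delta>"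
    using norm_orthogonal_projection_le[OF unit(1), of "\<nu>' - \<nu>"] close \<open>\<delta>\<^sup>2 \<le> \<delta>\<close>
    by (simp only:)
  have "(norm (\<nu>' - \<nu>))\<^sup>2 = (\<nu>' - \<nu>) \<bullet> (\<nu>' - \<nu>)" by (simp add: dot_square_norm)
  also have "\<dots> = \<nu>' \<bullet> \<nu>' + \<nu> \<bullet> \<nu> - 2 * (\<nu>' \<bullet> \<nu>)"
    by (simp add: inner_diff_left inner_diff_right inner_commute)
  also have "\<dots> = 2 - 2 * (\<nu>' \<bullet> \<nu>)" using unit by (simp add: dot_square_norm)
  finally have "(norm (\<nu>' - \<nu>))\<^sup>2 = 2 - 2 * (\<nu>' \<bullet> \<nu>)" .
  moreover have "norm (\<nu>' - \<nu>) \<le> 1" using close \<open>\<delta>\<^sup>2 \<le> \<delta>\<close> \<delta> by linarith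
  then have "(norm (\<nu>' - \<nu>))\<^sup>2 \<le> 1" by (simp add: power_le_one)
  ultimately show "0 \<le> \<nu>' \<bullet> \<nu>" by linarith
qed

lemma openin_sR_ball:
  fixes p :: "'a::euclidean_space \<times> 'a"
  assumes "DIM('a) \<ge> 2"
  shows "openin (top_of_set cosphere) (sR_ball p \<tau>)"
  unfolding openin_euclidean_subtopology_iff
proof (intro conjI ballI sR_ball_subset_cosphere)
  fix q assume q: "q \<in> sR_ball p \<tau>"
  obtain L where L: "sR_reachable p q L" "0 \<le> L" "L < \<tau>"
    using q by (rule mem_sR_ball_imp_sR_reachable)
  obtain y \<nu> where q_eq: "q = (y, \<nu>)" by fastforce
  have "q \<in> cosphere" using q sR_ball_subset_cosphere by blast
  then have \<nu>: "norm \<nu> = 1" by (simp add: cosphere_def q_eq)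
  define \<delta> where "\<delta> = min (1/2) ((\<tau> - L) / 18)"
  have \<delta>: "0 < \<delta>" "\<delta> \<le> 1/2" "9 * \<delta> < \<tau> - L"
    using L min.cobounded2[of "1/2" "(\<tau> - L) / 18"] by (auto simp: \<delta>_def)
  show "\<exists>e>0. \<forall>q'\<in>cosphere. dist q' q < e \<longrightarrow> q' \<in> sR_ball p \<tau>"
  proof (intro exI[of _ "\<delta>\<^sup>2"] conjI ballI impI)
    fix q' assume q': "q' \<in> cosphere" "dist q' q < \<delta>\<^sup>2"
    obtain y' \<nu>' where q'_eq: "q' = (y', \<nu>')" by fastforce
    have \<nu>': "norm \<nu>' = 1" using q' by (simp add: cosphere_def q'_eq)
    have "norm (y' - y) < \<delta>\<^sup>2" "norm (\<nu>' - \<nu>) < \<delta>\<^sup>2"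
      using q'(2) dist_fst_le[of q' q] dist_snd_le[of q' q] by (auto simp: q_eq q'_eq dist_norm)
    then have "sR_reachable q q' (9 * \<delta>)"
      unfolding q_eq q'_eq by (rule sR_reachable_nearby[OF assms \<nu> \<nu>' \<delta>(1,2)])
    then have "sR_reachable p q' (L + 9 * \<delta>)" using sR_reachable_trans[OF L(1)] L \<delta> by auto
    then show "q' \<in> sR_ball p \<tau>" by (rule sR_reachable_imp_mem_sR_ball) (use \<delta> L in auto)
  qed (use \<delta> in simp)
qed

lemma sets_sR_ball:
  fixes p :: "'a::euclidean_space \<times> 'a"
  assumes "DIM('a) \<ge> 2"
  shows "sR_ball p \<tau> \<in> sets borel"
proof -
  obtain U where "open U" "sR_ball p \<tau> = cosphere \<inter> U"
    using openin_sR_ball[OF assms, of p \<tau>] unfolding openin_open by blast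
  moreover have "closed (cosphere :: ('a \<times> 'a) set)" by (simp add: cosphere_def closed_Times)
  ultimately show ?thesis by auto
qed

section \<open>Invariance of Lebesgue measure under orthogonal involutions\<close>

lemma distr_lborel_orthogonal_involution_cart:
  fixes G :: "real^'n::{finite,wellorder} \<Rightarrow> real^'n::_"
  assumes orth: "orthogonal_transformation G" and inv: "\<And>v. G (G v) = v"
  shows "distr lborel borel G = lborel"
proof (rule lborel_eqI[symmetric])
  have G_meas [measurable]: "G \<in> borel_measurable borel"
    using orth by (intro borel_measurable_continuous_onI linear_continuous_on
        linear_conv_bounded_linear[THEN iffD1] orthogonal_transformation_linear)
  fix l u :: "real^'n::_" assume le: "\<And>b. b \<in> Basis \<Longrightarrow> l \<bullet> b \<le> u \<bullet> b"
  have image: "G -` box l u = G ` box l u"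
    using inv by (auto intro: image_eqI[where x="G _"])
  have "G -` box l u \<in> sets borel" using measurable_sets[OF G_meas, of "box l u"] by simp
  then have "emeasure (distr lborel borel G) (box l u) = emeasure lebesgue (G ` box l u)"
    by (simp add: emeasure_distr image[symmetric])
  also have "\<dots> = ennreal (measure lebesgue (G ` box l u))"
    using measurable_orthogonal_image[OF orth, of "box l u"]
    by (intro emeasure_eq_ennreal_measure fmeasurableD2) auto
  also have "\<dots> = emeasure lborel (box l u)"
    using measure_orthogonal_image[OF orth, of "box l u"]
    by (simp add: emeasure_eq_ennreal_measure fmeasurableD2)
  finally show "emeasure (distr lborel borel G) (box l u) = (\<Prod>b\<in>Basis. (u - l) \<bullet> b)"
    using le by simp
qed simp

text \<open>
  The library proves the invariance only on \<open>real^'n\<close> with a wellordered index type; indexing the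
  basis of \<open>'a\<close> by such a type identifies \<open>'a\<close> isometrically with \<open>real^('a basis_index)\<close>.
\<close>

typedef (overloaded) ('a::euclidean_space) basis_index = "Basis :: 'a set"
  using nonempty_Basis by blast

instance basis_index :: (euclidean_space) finite
  by standard (simp add: type_definition.univ[OF type_definition_basis_index])

lemma inj_to_nat_on_basis_index: "inj (to_nat_on (UNIV :: 'a::euclidean_space basis_index set))"
  by (rule inj_on_to_nat_on) (simp add: countable_finite)

instantiation basis_index :: (euclidean_space) linorder
begin

definition less_eq_basis_index :: "'a basis_index \<Rightarrow> 'a basis_index \<Rightarrow> bool"
  where "less_eq_basis_index i j \<longleftrightarrow> to_nat_on UNIV i \<le> to_nat_on UNIV j"

definition less_basis_index :: "'a basis_index \<Rightarrow> 'a basis_index \<Rightarrow> bool"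
  where "less_basis_index i j \<longleftrightarrow> to_nat_on UNIV i < to_nat_on UNIV j"

instance
  by standard (auto simp: less_eq_basis_index_def less_basis_index_def inj_eq[OF inj_to_nat_on_basis_index])

end

instance basis_index :: (euclidean_space) wellorder
proof
  fix P :: "'a basis_index \<Rightarrow> bool" and a
  assume step: "\<And>i. (\<And>j. j < i \<Longrightarrow> P j) \<Longrightarrow> P i"
  show "P a"
    by (induction a rule: measure_induct_rule[of "to_nat_on UNIV"]) (rule step, simp add: less_basis_index_def)
qed

definition to_cart :: "'a::euclidean_space \<Rightarrow> real^('a basis_index)"
  where "to_cart x = (\<chi> i. x \<bullet> Rep_basis_index i)"

definition from_cart :: "real^('a::euclidean_space basis_index) \<Rightarrow> 'a"
  where "from_cart v = (\<Sum>i\<in>UNIV. (v $ i) *\<^sub>R Rep_basis_index i)"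

lemma range_Rep_basis_index: "range Rep_basis_index = (Basis :: 'a::euclidean_space set)"
  by (rule type_definition.Rep_range[OF type_definition_basis_index])

lemma sum_basis_index:
  "(\<Sum>i\<in>UNIV. f (Rep_basis_index i)) = (\<Sum>b\<in>(Basis :: 'a::euclidean_space set). f b)"
  unfolding range_Rep_basis_index[symmetric]
  using sum.reindex[of Rep_basis_index UNIV f] by (simp add: inj_on_def Rep_basis_index_inject)

lemma prod_basis_index:
  "(\<Prod>i\<in>UNIV. f (Rep_basis_index i)) = (\<Prod>b\<in>(Basis :: 'a::euclidean_space set). f b)"
  unfolding range_Rep_basis_index[symmetric]
  using prod.reindex[of Rep_basis_index UNIV f] by (simp add: inj_on_def Rep_basis_index_inject)

lemma inner_Rep_basis_index:
  "Rep_basis_index i \<bullet> Rep_basis_index j = (if i = j then 1 else (0::real))"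
  using Rep_basis_index[of i] Rep_basis_index[of j] by (auto simp: inner_Basis Rep_basis_index_inject)

lemma from_cart_to_cart [simp]: "from_cart (to_cart x) = x"
  using sum_basis_index[of "\<lambda>b. (x \<bullet> b) *\<^sub>R b"]
  by (simp add: from_cart_def to_cart_def euclidean_representation)

lemma inner_from_cart_Rep: "from_cart v \<bullet> Rep_basis_index j = v $ j"
proof -
  have "from_cart v \<bullet> Rep_basis_index j = (\<Sum>i\<in>UNIV. (v $ i) * (Rep_basis_index i \<bullet> Rep_basis_index j))"
    by (simp add: from_cart_def inner_sum_left)
  also have "\<dots> = v $ j" by (simp add: inner_Rep_basis_index if_distrib cong: if_cong)
  finally show ?thesis .
qed

lemma to_cart_from_cart [simp]: "to_cart (from_cart v) = v"
  by (simp add: to_cart_def inner_from_cart_Rep vec_eq_iff)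

lemma inner_to_cart: "to_cart x \<bullet> to_cart y = x \<bullet> y"
proof -
  have "to_cart x \<bullet> to_cart y = (\<Sum>i\<in>UNIV. (x \<bullet> Rep_basis_index i) * (y \<bullet> Rep_basis_index i))"
    by (simp add: inner_vec_def to_cart_def)
  also have "\<dots> = x \<bullet> y"
    using sum_basis_index[of "\<lambda>b. (x \<bullet> b) * (y \<bullet> b)"] by (simp add: euclidean_inner[of x y])
  finally show ?thesis .
qed

lemma inner_from_cart: "from_cart v \<bullet> from_cart w = v \<bullet> w"
  using inner_to_cart[of "from_cart v" "from_cart w"] by simp

lemma linear_to_cart: "linear to_cart"
  by (auto simp: linear_iff to_cart_def vec_eq_iff inner_add_left)

lemma linear_from_cart: "linear from_cart"
  by (auto simp: linear_iff from_cart_def scaleR_add_left sum.distrib scaleR_sum_right)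

lemma borel_measurable_from_cart [measurable]: "from_cart \<in> borel_measurable borel"
  by (intro borel_measurable_continuous_onI linear_continuous_on
      linear_conv_bounded_linear[THEN iffD1] linear_from_cart)

lemma from_cart_vimage_box: "from_cart -` box l u = box (to_cart l) (to_cart u)"
proof -
  have "v \<in> from_cart -` box l u \<longleftrightarrow>
      (\<forall>i. l \<bullet> Rep_basis_index i < v $ i \<and> v $ i < u \<bullet> Rep_basis_index i)" for v
    by (simp add: mem_box range_Rep_basis_index[symmetric] inner_from_cart_Rep)
  then show ?thesis by (auto simp: mem_box_cart to_cart_def)
qed

lemma distr_lborel_from_cart:
  "distr lborel borel (from_cart :: real^('a::euclidean_space basis_index) \<Rightarrow> 'a) = lborel"
proof (rule lborel_eqI[symmetric])
  fix l u :: 'a assume le: "\<And>b. b \<in> Basis \<Longrightarrow> l \<bullet> b \<le> u \<bullet> b"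
  have le': "to_cart l \<bullet> c \<le> to_cart u \<bullet> c" if c: "c \<in> Basis" for c
  proof -
    obtain i where i: "c = axis i 1" using c by (auto simp: Basis_vec_def)
    show ?thesis using le[OF Rep_basis_index[of i]] by (simp add: i inner_axis to_cart_def)
  qed
  have basis: "(Basis :: (real^('a basis_index)) set) = range (\<lambda>i. axis i 1)"
    by (auto simp: Basis_vec_def)
  have "emeasure (distr lborel borel from_cart) (box l u) = emeasure lborel (box (to_cart l) (to_cart u))"
    by (simp add: emeasure_distr from_cart_vimage_box)
  also have "\<dots> = (\<Prod>c\<in>Basis. (to_cart u - to_cart l) \<bullet> c)" by (rule emeasure_lborel_box[OF le'])
  also have "\<dots> = (\<Prod>i\<in>UNIV. (to_cart u - to_cart l) \<bullet> axis i 1)"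
    unfolding basis by (subst prod.reindex) (auto simp: inj_on_def axis_eq_axis)
  also have "\<dots> = (\<Prod>b\<in>Basis. (u - l) \<bullet> b)"
    using prod_basis_index[of "\<lambda>b. (u - l) \<bullet> b"] by (simp add: inner_axis to_cart_def inner_diff_left)
  finally show "emeasure (distr lborel borel from_cart) (box l u) = (\<Prod>b\<in>Basis. (u - l) \<bullet> b)" .
qed simp

lemma distr_lborel_orthogonal_involution:
  fixes H :: "'a::euclidean_space \<Rightarrow> 'a"
  assumes orth: "orthogonal_transformation H" and inv: "\<And>x. H (H x) = x"
  shows "distr lborel borel H = lborel"
proof -
  define G where "G v = to_cart (H (from_cart v))" for v :: "real^('a basis_index)"
  have "linear G"
    unfolding G_def[abs_def] using orthogonal_transformation_linear[OF orth]
    by (intro linear_compose[OF linear_compose[OF linear_from_cart], unfolded o_def] linear_to_cart)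
  then have "orthogonal_transformation G"
    using orth by (simp add: orthogonal_transformation_def G_def inner_to_cart inner_from_cart)
  then have G: "distr lborel borel G = lborel"
    by (rule distr_lborel_orthogonal_involution_cart) (simp add: G_def inv)
  have [measurable]: "H \<in> borel_measurable borel" "G \<in> borel_measurable borel"
    using orthogonal_transformation_linear[OF orth] \<open>linear G\<close>
    by (auto intro!: borel_measurable_continuous_onI linear_continuous_on linear_conv_bounded_linear[THEN iffD1])
  have "distr lborel borel H = distr (distr lborel borel from_cart) borel H"
    by (simp only: distr_lborel_from_cart)
  also have "\<dots> = distr lborel borel (H \<circ> from_cart)" by (simp add: distr_distr)
  also have "H \<circ> from_cart = from_cart \<circ> G" by (simp add: G_def fun_eq_iff)
  also have "distr lborel borel (from_cart \<circ> G) = distr (distr lborel borel G) borel from_cart"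
    by (simp add: distr_distr)
  finally show ?thesis by (simp only: G distr_lborel_from_cart)
qed

section \<open>Slabs and spherical caps\<close>

lemma sets_sphere_measure [measurable_cong]:
  "sets (sphere_measure :: 'a::euclidean_space measure) = sets borel"
  by (simp add: sphere_measure_def)

lemma emeasure_sphere_measure:
  assumes A: "A \<in> sets (borel :: 'a::euclidean_space measure)"
  shows "emeasure (sphere_measure :: 'a measure) A = ennreal DIM('a) * emeasure lborel (sgn -` A \<inter> ball 0 1)"
proof -
  have sgn_A: "sgn -` A \<in> sets (borel :: 'a measure)"
    using measurable_sets[OF borel_measurable_sgn A] by simp
  have [measurable]: "ball (0::'a) 1 \<in> sets borel" by simp
  have "emeasure (sphere_measure :: 'a measure) A =
      emeasure (density lborel (\<lambda>x::'a. ennreal DIM('a) * indicator (ball 0 1) x)) (sgn -` A)"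
    unfolding sphere_measure_def using A by (subst emeasure_distr) auto
  also have "\<dots> = (\<integral>\<^sup>+ x. ennreal DIM('a) * indicator (sgn -` A \<inter> ball 0 1) x \<partial>lborel)"
    using sgn_A by (subst emeasure_density) (auto intro!: nn_integral_cong split: split_indicator)
  also have "\<dots> = ennreal DIM('a) * emeasure lborel (sgn -` A \<inter> ball 0 1)"
    using sgn_A by (subst nn_integral_cmult_indicator) auto
  finally show ?thesis .
qed

lemma finite_measure_sphere_measure: "finite_measure (sphere_measure :: 'a::euclidean_space measure)"
proof (rule finite_measureI)
  have "emeasure (sphere_measure :: 'a measure) (space sphere_measure) =
      ennreal DIM('a) * emeasure lborel (ball (0::'a) 1)"
    using emeasure_sphere_measure[of UNIV] by (simp add: sphere_measure_def)
  also have "\<dots> < \<infinity>" using emeasure_lborel_ball_finite[of "0::'a" 1] by (simp add: ennreal_mult_less_top)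
  finally show "emeasure (sphere_measure :: 'a measure) (space sphere_measure) \<noteq> \<infinity>" by simp
qed

lemma sets_cosphere_measure: "sets (cosphere_measure :: ('a::euclidean_space \<times> 'a) measure) = sets borel"
proof -
  have "sets (cosphere_measure :: ('a \<times> 'a) measure) = sets ((borel :: 'a measure) \<Otimes>\<^sub>M (borel :: 'a measure))"
    unfolding cosphere_measure_def by (intro sets_pair_measure_cong) (auto simp: sets_sphere_measure)
  then show ?thesis by (simp only: borel_prod)
qed

lemma Times_in_sets_borel:
  fixes Y C :: "'a::euclidean_space set"
  assumes "Y \<in> sets borel" "C \<in> sets borel"
  shows "Y \<times> C \<in> sets borel"
proof -
  have "Y \<times> C \<in> sets ((borel :: 'a measure) \<Otimes>\<^sub>M (borel :: 'a measure))" using assms by auto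
  then show ?thesis by (simp only: borel_prod)
qed

lemma vol_Times:
  fixes Y C :: "'a::euclidean_space set"
  assumes "Y \<in> sets borel" "C \<in> sets borel"
  shows "vol (Y \<times> C) = emeasure lborel Y * emeasure sphere_measure C"
proof -
  interpret finite_measure "sphere_measure :: 'a measure" by (rule finite_measure_sphere_measure)
  show ?thesis unfolding vol_def cosphere_measure_def
    by (rule emeasure_pair_measure_Times) (use assms in auto)
qed

lemma vol_mono: "A \<subseteq> B \<Longrightarrow> B \<in> sets borel \<Longrightarrow> vol A \<le> vol B"
  unfolding vol_def by (rule emeasure_mono) (auto simp: sets_cosphere_measure)

definition reflect :: "'a::real_inner \<Rightarrow> 'a \<Rightarrow> 'a" where
  "reflect u x = x - (2 * (x \<bullet> u) / (u \<bullet> u)) *\<^sub>R u"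

lemma linear_reflect: "linear (reflect u)"
  by (auto simp: linear_iff reflect_def inner_add_left algebra_simps add_divide_distrib scaleR_add_left)

lemma inner_reflect: "reflect u x \<bullet> reflect u y = x \<bullet> y"
  by (cases "u = 0")
     (simp_all add: reflect_def inner_diff_left inner_diff_right inner_commute field_simps power2_eq_square)

lemma norm_reflect [simp]: "norm (reflect u x) = norm x"
  using inner_reflect[of u x x] by (simp add: norm_eq_sqrt_inner)

lemma reflect_reflect [simp]: "reflect u (reflect u x) = x"
proof (cases "u = 0")
  case False
  then have "reflect u x \<bullet> u = - (x \<bullet> u)" by (simp add: reflect_def inner_diff_left field_simps)
  then show ?thesis using False by (simp add: reflect_def algebra_simps)
qed (simp add: reflect_def)

lemma orthogonal_transformation_reflect: "orthogonal_transformation (reflect u)"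
  by (simp add: orthogonal_transformation_def linear_reflect inner_reflect)

lemma borel_measurable_reflect [measurable]: "reflect (u :: 'a::euclidean_space) \<in> borel_measurable borel"
  by (intro borel_measurable_continuous_onI linear_continuous_on
      linear_conv_bounded_linear[THEN iffD1] linear_reflect)

lemma sgn_reflect: "sgn (reflect u x) = reflect u (sgn x)"
  by (simp add: sgn_div_norm linear_cmul[OF linear_reflect])

lemma reflect_unit_vector:
  fixes \<omega> e :: "'a::real_inner"
  assumes "norm \<omega> = 1" "norm e = 1"
  shows "reflect (\<omega> - e) \<omega> = e"
proof (cases "\<omega> = e")
  case False
  have unit: "\<omega> \<bullet> \<omega> = 1" "e \<bullet> e = 1" using assms by (simp_all add: dot_square_norm)
  then have eq: "(\<omega> - e) \<bullet> (\<omega> - e) = 2 * (\<omega> \<bullet> (\<omega> - e))"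
    by (simp add: inner_diff_left inner_diff_right inner_commute)
  have nz: "\<omega> \<bullet> (\<omega> - e) \<noteq> 0"
  proof
    assume "\<omega> \<bullet> (\<omega> - e) = 0"
    then have "(\<omega> - e) \<bullet> (\<omega> - e) = 0" using eq by simp
    with False show False by simp
  qed
  have "2 * (\<omega> \<bullet> (\<omega> - e)) / ((\<omega> - e) \<bullet> (\<omega> - e)) = 2 * (\<omega> \<bullet> (\<omega> - e)) / (2 * (\<omega> \<bullet> (\<omega> - e)))"
    by (simp only: eq)
  also have "\<dots> = 1" using nz by (intro divide_self) simp
  finally have ratio: "2 * (\<omega> \<bullet> (\<omega> - e)) / ((\<omega> - e) \<bullet> (\<omega> - e)) = 1" .
  show ?thesis unfolding reflect_def ratio by simp
qed (simp add: reflect_def)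

lemma emeasure_lborel_reflect_vimage:
  assumes "S \<in> sets borel"
  shows "emeasure lborel (reflect u -` S) = emeasure lborel (S :: 'a::euclidean_space set)"
proof -
  have "emeasure lborel S = emeasure (distr lborel borel (reflect u)) S"
    by (simp only: distr_lborel_orthogonal_involution[OF orthogonal_transformation_reflect reflect_reflect])
  also have "\<dots> = emeasure lborel (reflect u -` S)" using assms by (subst emeasure_distr) auto
  finally show ?thesis by simp
qed

lemma emeasure_lborel_reflect_translate_vimage:
  assumes "K \<in> sets borel"
  shows "emeasure lborel ((\<lambda>y. reflect u (y - x)) -` K) = emeasure lborel (K :: 'a::euclidean_space set)"
proof -
  have K': "reflect u -` K \<in> sets borel" using measurable_sets[OF borel_measurable_reflect assms] by simp
  have "(\<lambda>y. reflect u (y - x)) -` K = (\<lambda>y. - x + y) -` (reflect u -` K)" by auto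
  also have "emeasure lborel \<dots> = emeasure (distr lborel borel ((+) (- x))) (reflect u -` K)"
    using K' by (subst emeasure_distr) auto
  also have "\<dots> = emeasure lborel K"
    by (simp only: lborel_distr_plus emeasure_lborel_reflect_vimage[OF assms])
  finally show ?thesis .
qed

lemma emeasure_sphere_measure_reflect_vimage:
  assumes "A \<in> sets borel"
  shows "emeasure sphere_measure (reflect u -` A) = emeasure sphere_measure (A :: 'a::euclidean_space set)"
proof -
  have A': "reflect u -` A \<in> sets borel" using measurable_sets[OF borel_measurable_reflect assms] by simp
  have eq: "sgn -` (reflect u -` A) \<inter> ball 0 1 = reflect u -` (sgn -` A \<inter> ball 0 1)"
    by (auto simp: sgn_reflect)
  have "sgn -` A \<inter> ball 0 1 \<in> sets borel"
    using measurable_sets[OF borel_measurable_sgn assms] by auto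
  then show ?thesis
    using emeasure_sphere_measure[OF A'] emeasure_sphere_measure[OF assms] eq
      emeasure_lborel_reflect_vimage[of "sgn -` A \<inter> ball 0 1" u]
    by simp
qed

definition basis_split :: "'a::euclidean_space \<Rightarrow> real \<Rightarrow> real \<Rightarrow> 'a" where
  "basis_split e p q = (\<Sum>b\<in>Basis. (if b = e then p else q) *\<^sub>R b)"

lemma inner_basis_split:
  assumes "b \<in> Basis"
  shows "basis_split e p q \<bullet> b = (if b = e then p else q)"
proof -
  have "basis_split e p q \<bullet> b = (\<Sum>b'\<in>Basis. if b' = b then (if b' = e then p else q) else 0)"
    unfolding basis_split_def inner_sum_left using assms by (intro sum.cong) (auto simp: inner_Basis)
  then show ?thesis using assms by (simp add: sum.delta)
qed

lemma sum_Basis_if: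
  assumes "(e::'a::euclidean_space) \<in> Basis"
  shows "(\<Sum>b\<in>Basis. if b = e then p else q) = p + real (DIM('a) - 1) * (q::real)"
  using assms by (simp add: sum.If_cases Int_absorb1 card_Diff_singleton Diff_eq[symmetric])

lemma prod_Basis_if:
  assumes "(e::'a::euclidean_space) \<in> Basis"
  shows "(\<Prod>b\<in>Basis. if b = e then p else q) = p * (q::real) ^ (DIM('a) - 1)"
  using assms by (simp add: prod.If_cases Int_absorb1 card_Diff_singleton Diff_eq[symmetric])

lemma mem_box_basis_split:
  shows "z \<in> box (c + basis_split e p1 q1) (c + basis_split e p2 q2) \<longleftrightarrow>
     (\<forall>b\<in>Basis. (if b = e then p1 else q1) < (z - c) \<bullet> b \<and> (z - c) \<bullet> b < (if b = e then p2 else q2))"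
  by (auto simp: mem_box inner_add_left inner_diff_left inner_basis_split)

lemma mem_cbox_basis_split:
  shows "z \<in> cbox (c + basis_split e p1 q1) (c + basis_split e p2 q2) \<longleftrightarrow>
     (\<forall>b\<in>Basis. (if b = e then p1 else q1) \<le> (z - c) \<bullet> b \<and> (z - c) \<bullet> b \<le> (if b = e then p2 else q2))"
  by (auto simp: mem_box inner_add_left inner_diff_left inner_basis_split)

lemma emeasure_box_basis_split:
  fixes e c :: "'a::euclidean_space"
  assumes "e \<in> Basis" "p1 \<le> p2" "q1 \<le> q2"
  shows "emeasure lborel (box (c + basis_split e p1 q1) (c + basis_split e p2 q2))
      = ennreal ((p2 - p1) * (q2 - q1) ^ (DIM('a) - 1))"
    and "emeasure lborel (cbox (c + basis_split e p1 q1) (c + basis_split e p2 q2))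
      = ennreal ((p2 - p1) * (q2 - q1) ^ (DIM('a) - 1))"
proof -
  have le: "\<And>b. b \<in> Basis \<Longrightarrow> (c + basis_split e p1 q1) \<bullet> b \<le> (c + basis_split e p2 q2) \<bullet> b"
    using assms by (auto simp: inner_add_left inner_basis_split)
  have "(\<Prod>b\<in>Basis. ((c + basis_split e p2 q2) - (c + basis_split e p1 q1)) \<bullet> b)
      = (\<Prod>b\<in>Basis. if b = e then p2 - p1 else q2 - q1)"
    by (intro prod.cong) (auto simp: inner_diff_left inner_basis_split)
  also have "\<dots> = (p2 - p1) * (q2 - q1) ^ (DIM('a) - 1)" by (rule prod_Basis_if[OF assms(1)])
  finally show "emeasure lborel (box (c + basis_split e p1 q1) (c + basis_split e p2 q2))
      = ennreal ((p2 - p1) * (q2 - q1) ^ (DIM('a) - 1))"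
    and "emeasure lborel (cbox (c + basis_split e p1 q1) (c + basis_split e p2 q2))
      = ennreal ((p2 - p1) * (q2 - q1) ^ (DIM('a) - 1))"
    using le by (simp_all add: prod_ennreal)
qed

lemma reflect_to_basis_vector:
  fixes \<omega> e :: "'a::euclidean_space"
  assumes "norm \<omega> = 1" "e \<in> Basis"
  shows "reflect (\<omega> - e) z \<bullet> e = z \<bullet> \<omega>"
    and "norm (reflect (\<omega> - e) z - (z \<bullet> \<omega>) *\<^sub>R e) = norm (z - (z \<bullet> \<omega>) *\<^sub>R \<omega>)"
    and "norm (reflect (\<omega> - e) z - e) = norm (z - \<omega>)"
proof -
  have R\<omega>: "reflect (\<omega> - e) \<omega> = e" using assms by (intro reflect_unit_vector) auto
  show "reflect (\<omega> - e) z \<bullet> e = z \<bullet> \<omega>"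
    using inner_reflect[of "\<omega> - e" z \<omega>] by (simp add: R\<omega>)
  have "reflect (\<omega> - e) (z - (z \<bullet> \<omega>) *\<^sub>R \<omega>) = reflect (\<omega> - e) z - (z \<bullet> \<omega>) *\<^sub>R e"
    by (simp add: linear_diff[OF linear_reflect] linear_cmul[OF linear_reflect] R\<omega>)
  then show "norm (reflect (\<omega> - e) z - (z \<bullet> \<omega>) *\<^sub>R e) = norm (z - (z \<bullet> \<omega>) *\<^sub>R \<omega>)"
    by (metis norm_reflect)
  have "reflect (\<omega> - e) (z - \<omega>) = reflect (\<omega> - e) z - e"
    by (simp add: linear_diff[OF linear_reflect] R\<omega>)
  then show "norm (reflect (\<omega> - e) z - e) = norm (z - \<omega>)" by (metis norm_reflect)
qed

lemma emeasure_slab_le: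
  fixes x \<omega> :: "'a::euclidean_space" and \<tau> :: real
  assumes "norm \<omega> = 1" "0 \<le> \<tau>"
  shows "emeasure lborel {y. norm (y - x) \<le> \<tau> \<and> \<bar>(y - x) \<bullet> \<omega>\<bar> \<le> \<tau>\<^sup>2}
    \<le> ennreal (2 * \<tau>\<^sup>2 * (2 * \<tau>) ^ (DIM('a) - 1))"
proof -
  obtain e :: 'a where e: "e \<in> Basis" using nonempty_Basis by blast
  define K where "K = cbox (basis_split e (- \<tau>\<^sup>2) (- \<tau>)) (basis_split e (\<tau>\<^sup>2) \<tau>)"
  have K: "K \<in> sets borel" by (simp add: K_def)
  have "{y. norm (y - x) \<le> \<tau> \<and> \<bar>(y - x) \<bullet> \<omega>\<bar> \<le> \<tau>\<^sup>2} \<subseteq> (\<lambda>y. reflect (\<omega> - e) (y - x)) -` K"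
  proof
    fix y assume "y \<in> {y. norm (y - x) \<le> \<tau> \<and> \<bar>(y - x) \<bullet> \<omega>\<bar> \<le> \<tau>\<^sup>2}"
    then have y: "norm (y - x) \<le> \<tau>" "\<bar>(y - x) \<bullet> \<omega>\<bar> \<le> \<tau>\<^sup>2" by auto
    have "- \<tau> \<le> reflect (\<omega> - e) (y - x) \<bullet> b \<and> reflect (\<omega> - e) (y - x) \<bullet> b \<le> \<tau>"
      if "b \<in> Basis" for b
      using Basis_le_norm[OF that, of "reflect (\<omega> - e) (y - x)"] y(1) by (simp add: abs_le_iff)
    then have "reflect (\<omega> - e) (y - x) \<in> K"
      using y(2) reflect_to_basis_vector(1)[OF assms(1) e, of "y - x"]
      unfolding K_def mem_cbox_basis_split[where c=0, unfolded add_0_left diff_zero] by (auto simp: abs_le_iff)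
    then show "y \<in> (\<lambda>y. reflect (\<omega> - e) (y - x)) -` K" by simp
  qed
  then have "emeasure lborel {y. norm (y - x) \<le> \<tau> \<and> \<bar>(y - x) \<bullet> \<omega>\<bar> \<le> \<tau>\<^sup>2}
      \<le> emeasure lborel ((\<lambda>y. reflect (\<omega> - e) (y - x)) -` K)"
    using measurable_sets[of "\<lambda>y. reflect (\<omega> - e) (y - x)" borel borel K] K
    by (intro emeasure_mono) auto
  also have "\<dots> = emeasure lborel K" by (rule emeasure_lborel_reflect_translate_vimage[OF K])
  also have "\<dots> = ennreal ((\<tau>\<^sup>2 - - \<tau>\<^sup>2) * (\<tau> - - \<tau>) ^ (DIM('a) - 1))"
    unfolding K_def using emeasure_box_basis_split(2)[OF e, of "- \<tau>\<^sup>2" "\<tau>\<^sup>2" "- \<tau>" \<tau> 0] assms(2) by simp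
  finally show ?thesis by simp
qed

lemma norm_le_sum_Basis_if:
  fixes z :: "'a::euclidean_space"
  assumes "\<And>b. b \<in> Basis \<Longrightarrow> \<bar>z \<bullet> b\<bar> \<le> (if b = e then p else q)" "e \<in> Basis"
  shows "norm z \<le> p + real (DIM('a) - 1) * q"
proof -
  have "norm z \<le> (\<Sum>b\<in>Basis. \<bar>z \<bullet> b\<bar>)" by (rule norm_le_l1)
  also have "\<dots> \<le> (\<Sum>b\<in>Basis. if b = e then p else q)" using assms(1) by (rule sum_mono)
  also have "\<dots> = p + real (DIM('a) - 1) * q" by (rule sum_Basis_if[OF assms(2)])
  finally show ?thesis .
qed

lemma emeasure_slab_ge:
  fixes x \<omega> :: "'a::euclidean_space" and \<delta> :: real
  assumes "norm \<omega> = 1" "0 < \<delta>"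
  shows "ennreal (2 * \<delta>\<^sup>2 * (2 * \<delta> / DIM('a)) ^ (DIM('a) - 1))
    \<le> emeasure lborel {y. \<bar>(y - x) \<bullet> \<omega>\<bar> < \<delta>\<^sup>2 \<and> norm ((y - x) - ((y - x) \<bullet> \<omega>) *\<^sub>R \<omega>) < \<delta>}"
proof -
  obtain e :: 'a where e: "e \<in> Basis" using nonempty_Basis by blast
  define q where "q = \<delta> / DIM('a)"
  have q: "0 < q" "real (DIM('a) - 1) * q < \<delta>"
    using assms(2) by (auto simp: q_def of_nat_diff field_simps)
  define K where "K = box (basis_split e (- \<delta>\<^sup>2) (- q)) (basis_split e (\<delta>\<^sup>2) q)"
  have K: "K \<in> sets borel" by (simp add: K_def)
  have "ennreal (2 * \<delta>\<^sup>2 * (2 * \<delta> / DIM('a)) ^ (DIM('a) - 1)) = emeasure lborel K"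
    unfolding K_def using emeasure_box_basis_split(1)[OF e, of "- \<delta>\<^sup>2" "\<delta>\<^sup>2" "- q" q 0] q(1)
    by (simp add: q_def)
  also have "\<dots> = emeasure lborel ((\<lambda>y. reflect (\<omega> - e) (y - x)) -` K)"
    by (rule emeasure_lborel_reflect_translate_vimage[OF K, symmetric])
  also have "\<dots> \<le> emeasure lborel {y. \<bar>(y - x) \<bullet> \<omega>\<bar> < \<delta>\<^sup>2 \<and> norm ((y - x) - ((y - x) \<bullet> \<omega>) *\<^sub>R \<omega>) < \<delta>}"
  proof (rule emeasure_mono)
    show "(\<lambda>y. reflect (\<omega> - e) (y - x)) -` K
        \<subseteq> {y. \<bar>(y - x) \<bullet> \<omega>\<bar> < \<delta>\<^sup>2 \<and> norm ((y - x) - ((y - x) \<bullet> \<omega>) *\<^sub>R \<omega>) < \<delta>}"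
    proof
      fix y assume "y \<in> (\<lambda>y. reflect (\<omega> - e) (y - x)) -` K"
      then have "reflect (\<omega> - e) (y - x) \<in> K" by simp
      then have z: "\<forall>b\<in>Basis. (if b = e then - \<delta>\<^sup>2 else - q) < reflect (\<omega> - e) (y - x) \<bullet> b \<and>
          reflect (\<omega> - e) (y - x) \<bullet> b < (if b = e then \<delta>\<^sup>2 else q)"
        unfolding K_def mem_box_basis_split[where c=0, unfolded add_0_left diff_zero] .
      define z where "z = reflect (\<omega> - e) (y - x)"
      have "\<bar>(y - x) \<bullet> \<omega>\<bar> < \<delta>\<^sup>2"
        using z e reflect_to_basis_vector(1)[OF assms(1) e, of "y - x"] by (auto simp: abs_less_iff)
      moreover have "norm (z - (z \<bullet> e) *\<^sub>R e) \<le> 0 + real (DIM('a) - 1) * q"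
        using z e by (intro norm_le_sum_Basis_if) (auto simp: z_def inner_diff_left inner_Basis abs_le_iff)
      then have "norm ((y - x) - ((y - x) \<bullet> \<omega>) *\<^sub>R \<omega>) < \<delta>"
        using q(2) reflect_to_basis_vector[OF assms(1) e, of "y - x"] by (simp add: z_def)
      ultimately show "y \<in> {y. \<bar>(y - x) \<bullet> \<omega>\<bar> < \<delta>\<^sup>2 \<and> norm ((y - x) - ((y - x) \<bullet> \<omega>) *\<^sub>R \<omega>) < \<delta>}"
        by simp
    qed
    show "{y. \<bar>(y - x) \<bullet> \<omega>\<bar> < \<delta>\<^sup>2 \<and> norm ((y - x) - ((y - x) \<bullet> \<omega>) *\<^sub>R \<omega>) < \<delta>} \<in> sets lborel"
      unfolding sets_lborel by (intro borel_open open_Collect_conj open_Collect_less continuous_intros)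
  qed
  finally show ?thesis .
qed

lemma cone_over_cap_subset_cbox:
  fixes e :: "'a::euclidean_space" and r :: real
  assumes e: "e \<in> Basis"
  shows "sgn -` (sphere 0 1 \<inter> cball e r) \<inter> ball 0 1 \<subseteq> cbox (basis_split e (-1) (- r)) (basis_split e 1 r)"
proof
  fix x :: 'a assume "x \<in> sgn -` (sphere 0 1 \<inter> cball e r) \<inter> ball 0 1"
  then have x: "norm x < 1" "norm (sgn x - e) \<le> r" by (auto simp: dist_norm norm_minus_commute)
  have "- 1 \<le> x \<bullet> e \<and> x \<bullet> e \<le> 1"
    using Basis_le_norm[OF e, of x] x(1) by (simp add: abs_le_iff)
  moreover have "- r \<le> x \<bullet> b \<and> x \<bullet> b \<le> r" if b: "b \<in> Basis" "b \<noteq> e" for b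
  proof -
    have "x \<bullet> b = norm x * (sgn x \<bullet> b)" by (cases "x = 0") (simp_all add: sgn_div_norm)
    also have "sgn x \<bullet> b = (sgn x - e) \<bullet> b" using b e by (simp add: inner_diff_left inner_Basis)
    finally have "x \<bullet> b = norm x * ((sgn x - e) \<bullet> b)" .
    moreover have "\<bar>norm x * ((sgn x - e) \<bullet> b)\<bar> \<le> 1 * r"
      using Basis_le_norm[OF b(1), of "sgn x - e"] x unfolding abs_mult by (intro mult_mono) auto
    ultimately show ?thesis by (simp add: abs_le_iff)
  qed
  ultimately show "x \<in> cbox (basis_split e (-1) (- r)) (basis_split e 1 r)"
    unfolding mem_cbox_basis_split[where c=0, unfolded add_0_left diff_zero] by auto
qed

lemma emeasure_sphere_cap_le:
  fixes \<omega> :: "'a::euclidean_space" and r :: real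
  assumes "norm \<omega> = 1" "0 \<le> r"
  shows "emeasure sphere_measure {\<nu>. \<nu> \<in> sphere 0 1 \<and> norm (\<nu> - \<omega>) \<le> r}
    \<le> ennreal (real DIM('a) * (2 * (2 * r) ^ (DIM('a) - 1)))"
proof -
  obtain e :: 'a where e: "e \<in> Basis" using nonempty_Basis by blast
  define C where "C = sphere (0::'a) 1 \<inter> cball e r"
  have C: "C \<in> sets borel" by (simp add: C_def)
  have "{\<nu>. \<nu> \<in> sphere 0 1 \<and> norm (\<nu> - \<omega>) \<le> r} = reflect (\<omega> - e) -` C"
    using reflect_to_basis_vector(3)[OF assms(1) e]
    by (auto simp: C_def dist_norm norm_minus_commute[of e])
  then have "emeasure sphere_measure {\<nu>. \<nu> \<in> sphere 0 1 \<and> norm (\<nu> - \<omega>) \<le> r}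
      = ennreal DIM('a) * emeasure lborel (sgn -` C \<inter> ball 0 1)"
    by (simp add: emeasure_sphere_measure_reflect_vimage[OF C] emeasure_sphere_measure[OF C])
  also have "emeasure lborel (sgn -` C \<inter> ball 0 1)
      \<le> emeasure lborel (cbox (basis_split e (-1) (- r)) (basis_split e 1 r))"
    unfolding C_def by (intro emeasure_mono cone_over_cap_subset_cbox[OF e]) simp
  also have "\<dots> = ennreal (2 * (2 * r) ^ (DIM('a) - 1))"
    using emeasure_box_basis_split(2)[OF e, of "-1" 1 "- r" r 0] assms(2) by simp
  finally show ?thesis by (simp add: ennreal_mult' mult_left_mono)
qed

lemma box_subset_cone_over_cap:
  fixes e :: "'a::euclidean_space" and r :: real
  assumes e: "e \<in> Basis" and r: "0 < r" "r \<le> 1/2"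
  defines "q \<equiv> r / (2 * DIM('a))"
  shows "box (basis_split e (1/2) (- q)) (basis_split e (3/4) q)
    \<subseteq> sgn -` {\<nu>. \<nu> \<in> sphere 0 1 \<and> 0 < \<nu> \<bullet> e \<and> norm (\<nu> - (\<nu> \<bullet> e) *\<^sub>R e) < r} \<inter> ball 0 1"
proof
  fix x :: 'a assume "x \<in> box (basis_split e (1/2) (- q)) (basis_split e (3/4) q)"
  then have x: "\<forall>b\<in>Basis. (if b = e then 1/2 else - q) < x \<bullet> b \<and> x \<bullet> b < (if b = e then 3/4 else q)"
    unfolding mem_box_basis_split[where c=0, unfolded add_0_left diff_zero] .
  have xe: "1/2 < x \<bullet> e" "x \<bullet> e < 3/4" using x e by auto
  have q: "0 < q" "real (DIM('a) - 1) * q < r / 2"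
    using r by (auto simp: q_def of_nat_diff field_simps)
  have "norm x \<le> 3/4 + real (DIM('a) - 1) * q"
    using x e by (intro norm_le_sum_Basis_if) (auto simp: abs_le_iff)
  then have norm_x: "norm x < 1" "1/2 < norm x"
    using q r xe Basis_le_norm[OF e, of x] by auto
  define v where "v = x - (x \<bullet> e) *\<^sub>R e"
  have "norm v \<le> 0 + real (DIM('a) - 1) * q"
    using x e by (intro norm_le_sum_Basis_if) (auto simp: v_def inner_diff_left inner_Basis abs_le_iff)
  have "sgn x - (sgn x \<bullet> e) *\<^sub>R e = v /\<^sub>R norm x"
    by (simp add: sgn_div_norm v_def algebra_simps)
  then have "norm (sgn x - (sgn x \<bullet> e) *\<^sub>R e) = norm v / norm x"
    by (simp add: divide_inverse mult.commute)
  also have "\<dots> \<le> norm v / (1/2)" using norm_x by (intro divide_left_mono) auto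
  also have "\<dots> < r" using \<open>norm v \<le> 0 + real (DIM('a) - 1) * q\<close> q by simp
  finally have "norm (sgn x - (sgn x \<bullet> e) *\<^sub>R e) < r" .
  have "sgn x \<bullet> e = (x \<bullet> e) / norm x" by (simp add: sgn_div_norm divide_inverse mult.commute)
  moreover have "0 < (x \<bullet> e) / norm x" using xe(1) norm_x(2) by (intro divide_pos_pos) linarith+
  ultimately have "0 < sgn x \<bullet> e" by (simp only:)
  moreover have "sgn x \<in> sphere 0 1" using norm_x by (auto simp: norm_sgn)
  ultimately show "x \<in> sgn -` {\<nu>. \<nu> \<in> sphere 0 1 \<and> 0 < \<nu> \<bullet> e \<and> norm (\<nu> - (\<nu> \<bullet> e) *\<^sub>R e) < r} \<inter> ball 0 1"
    using norm_x \<open>norm (sgn x - (sgn x \<bullet> e) *\<^sub>R e) < r\<close> by simp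
qed

lemma sets_sphere_cap:
  "{\<nu>::'a::euclidean_space. \<nu> \<in> sphere 0 1 \<and> 0 < \<nu> \<bullet> \<omega> \<and> norm (\<nu> - (\<nu> \<bullet> \<omega>) *\<^sub>R \<omega>) < r} \<in> sets borel"
proof -
  have "{\<nu>::'a. \<nu> \<in> sphere 0 1 \<and> 0 < \<nu> \<bullet> \<omega> \<and> norm (\<nu> - (\<nu> \<bullet> \<omega>) *\<^sub>R \<omega>) < r} =
    sphere 0 1 \<inter> {\<nu>. 0 < \<nu> \<bullet> \<omega> \<and> norm (\<nu> - (\<nu> \<bullet> \<omega>) *\<^sub>R \<omega>) < r}" by auto
  moreover have "open {\<nu>::'a. 0 < \<nu> \<bullet> \<omega> \<and> norm (\<nu> - (\<nu> \<bullet> \<omega>) *\<^sub>R \<omega>) < r}"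
    by (intro open_Collect_conj open_Collect_less continuous_intros)
  ultimately show ?thesis by auto
qed

lemma emeasure_sphere_cap_ge:
  fixes \<omega> :: "'a::euclidean_space" and r :: real
  assumes \<omega>: "norm \<omega> = 1" and r: "0 < r" "r \<le> 1/2"
  shows "ennreal (real DIM('a) * ((1/4) * (r / DIM('a)) ^ (DIM('a) - 1)))
    \<le> emeasure sphere_measure {\<nu>. \<nu> \<in> sphere 0 1 \<and> 0 < \<nu> \<bullet> \<omega> \<and> norm (\<nu> - (\<nu> \<bullet> \<omega>) *\<^sub>R \<omega>) < r}"
proof -
  obtain e :: 'a where e: "e \<in> Basis" using nonempty_Basis by blast
  define q where "q = r / (2 * DIM('a))"
  define C where "C = {\<nu>::'a. \<nu> \<in> sphere 0 1 \<and> 0 < \<nu> \<bullet> e \<and> norm (\<nu> - (\<nu> \<bullet> e) *\<^sub>R e) < r}"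
  have C: "C \<in> sets borel" unfolding C_def by (rule sets_sphere_cap)
  have box: "emeasure lborel (box (basis_split e (1/2) (- q)) (basis_split e (3/4) q))
      = ennreal ((1/4) * (r / DIM('a)) ^ (DIM('a) - 1))"
    using emeasure_box_basis_split(1)[OF e, of "1/2" "3/4" "- q" q 0] r by (simp add: q_def)
  have "ennreal (real DIM('a) * ((1/4) * (r / DIM('a)) ^ (DIM('a) - 1)))
      = ennreal DIM('a) * ennreal ((1/4) * (r / DIM('a)) ^ (DIM('a) - 1))"
    by (rule ennreal_mult') simp
  also have "\<dots> = ennreal DIM('a) * emeasure lborel (box (basis_split e (1/2) (- q)) (basis_split e (3/4) q))"
    by (simp only: box)
  also have "\<dots> \<le> ennreal DIM('a) * emeasure lborel (sgn -` C \<inter> ball 0 1)"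
  proof (intro mult_left_mono emeasure_mono)
    show "box (basis_split e (1/2) (- q)) (basis_split e (3/4) q) \<subseteq> sgn -` C \<inter> ball 0 1"
      unfolding C_def q_def by (rule box_subset_cone_over_cap[OF e r])
    show "sgn -` C \<inter> ball 0 1 \<in> sets lborel"
      using measurable_sets[OF borel_measurable_sgn C] by simp
  qed simp
  also have "\<dots> = emeasure sphere_measure C" by (rule emeasure_sphere_measure[OF C, symmetric])
  also have "\<dots> = emeasure sphere_measure (reflect (\<omega> - e) -` C)"
    by (rule emeasure_sphere_measure_reflect_vimage[OF C, symmetric])
  also have "reflect (\<omega> - e) -` C
      = {\<nu>. \<nu> \<in> sphere 0 1 \<and> 0 < \<nu> \<bullet> \<omega> \<and> norm (\<nu> - (\<nu> \<bullet> \<omega>) *\<^sub>R \<omega>) < r}"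
    unfolding C_def using reflect_to_basis_vector(1,2)[OF \<omega> e] by simp
  finally show ?thesis .
qed

lemma vol_sR_ball_le_small:
  fixes x \<omega> :: "'a::euclidean_space" and \<tau> :: real
  assumes "(x, \<omega>) \<in> cosphere" "0 < \<tau>"
  shows "vol (sR_ball (x, \<omega>) \<tau>) \<le> ennreal (real DIM('a) * 4 ^ DIM('a) * \<tau> ^ (2 * DIM('a)))"
proof -
  have \<omega>: "norm \<omega> = 1" using assms(1) by (simp add: cosphere_def)
  define Y where "Y = {y. norm (y - x) \<le> \<tau> \<and> \<bar>(y - x) \<bullet> \<omega>\<bar> \<le> \<tau>\<^sup>2}"
  define C where "C = {\<nu>. \<nu> \<in> sphere (0::'a) 1 \<and> norm (\<nu> - \<omega>) \<le> \<tau>}"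
  have Y: "Y \<in> sets borel" unfolding Y_def
    by (intro borel_closed closed_Collect_conj closed_Collect_le continuous_intros)
  have "C = sphere 0 1 \<inter> cball \<omega> \<tau>" by (auto simp: C_def dist_norm norm_minus_commute)
  then have C: "C \<in> sets borel" by simp
  have "sR_ball (x, \<omega>) \<tau> \<subseteq> Y \<times> C"
    using mem_sR_ball_displacement_bounds by (fastforce simp: Y_def C_def)
  then have "vol (sR_ball (x, \<omega>) \<tau>) \<le> emeasure lborel Y * emeasure sphere_measure C"
    using vol_mono[OF _ Times_in_sets_borel[OF Y C]] by (simp add: vol_Times[OF Y C])
  also have "\<dots> \<le> ennreal (2 * \<tau>\<^sup>2 * (2 * \<tau>) ^ (DIM('a) - 1)) * ennreal (real DIM('a) * (2 * (2 * \<tau>) ^ (DIM('a) - 1)))"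
    unfolding Y_def C_def using \<omega> assms(2)
    by (intro mult_mono emeasure_slab_le emeasure_sphere_cap_le) auto
  also have "\<dots> = ennreal (real DIM('a) * 4 ^ DIM('a) * \<tau> ^ (2 * DIM('a)))"
  proof -
    obtain m where m: "DIM('a) = Suc m" using DIM_positive not0_implies_Suc by blast
    have "(4::real) ^ Suc m = 4 * 2 ^ m * 2 ^ m" using power_mult_distrib[of "2::real" 2 m] by simp
    moreover have "\<tau> ^ (2 * Suc m) = \<tau>\<^sup>2 * \<tau> ^ m * \<tau> ^ m"
      by (simp add: power2_eq_square flip: power_add mult_2)
    ultimately show ?thesis using assms(2) unfolding m
      by (simp add: ennreal_mult'[symmetric] power_mult_distrib mult_ac)
  qed
  finally show ?thesis .
qed

section \<open>Volume of sub-Riemannian balls\<close>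

lemma emeasure_Times_le_vol_sR_ball:
  fixes Y C :: "'a::euclidean_space set"
  assumes "DIM('a) \<ge> 2" "Y \<in> sets borel" "C \<in> sets borel" "Y \<times> C \<subseteq> sR_ball p \<tau>"
  shows "emeasure lborel Y * emeasure sphere_measure C \<le> vol (sR_ball p \<tau>)"
  using vol_mono[OF assms(4) sets_sR_ball[OF assms(1)]] by (simp add: vol_Times[OF assms(2,3)])

lemma slab_Times_cap_subset_sR_ball:
  fixes x \<omega> :: "'a::euclidean_space"
  assumes "DIM('a) \<ge> 2" "norm \<omega> = 1" "0 < \<delta>" "\<delta> \<le> 1/2" "9 * \<delta> < \<tau>"
  shows "{y. \<bar>(y - x) \<bullet> \<omega>\<bar> < \<delta>\<^sup>2 \<and> norm ((y - x) - ((y - x) \<bullet> \<omega>) *\<^sub>R \<omega>) < \<delta>}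
      \<times> {\<nu>. \<nu> \<in> sphere 0 1 \<and> 0 < \<nu> \<bullet> \<omega> \<and> norm (\<nu> - (\<nu> \<bullet> \<omega>) *\<^sub>R \<omega>) < \<delta>}
    \<subseteq> sR_ball (x, \<omega>) \<tau>"
proof clarify
  fix y \<nu> :: 'a
  assume "\<bar>(y - x) \<bullet> \<omega>\<bar> < \<delta>\<^sup>2" "norm ((y - x) - ((y - x) \<bullet> \<omega>) *\<^sub>R \<omega>) < \<delta>"
    "\<nu> \<in> sphere 0 1" "0 < \<nu> \<bullet> \<omega>" "norm (\<nu> - (\<nu> \<bullet> \<omega>) *\<^sub>R \<omega>) < \<delta>"
  then have "sR_reachable (x, \<omega>) (y, \<nu>) (9 * \<delta>)"
    using assms by (intro sR_reachable_near) auto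
  then show "(y, \<nu>) \<in> sR_ball (x, \<omega>) \<tau>"
    by (rule sR_reachable_imp_mem_sR_ball) (use assms in auto)
qed

lemma vol_sR_ball_ge_small:
  assumes "DIM('a::euclidean_space) \<ge> 2"
  obtains B where "0 < B"
    "\<And>x (\<omega>::'a) \<tau>. (x, \<omega>) \<in> cosphere \<Longrightarrow> 0 < \<tau> \<Longrightarrow> \<tau> < 1 \<Longrightarrow>
       ennreal (B * \<tau> ^ (2 * DIM('a))) \<le> vol (sR_ball (x, \<omega>) \<tau>)"
proof -
  obtain m where m: "DIM('a) = Suc m" using DIM_positive not0_implies_Suc by blast
  define n where "n = real DIM('a)"
  define K where "K = 2 * (2 / n) ^ m * (n / 4 * (1 / n) ^ m)"
  have n: "0 < n" by (simp add: n_def)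
  show ?thesis
  proof (rule that[of "K * (1/10) ^ (2 * DIM('a))"])
    show "0 < K * (1/10) ^ (2 * DIM('a))" using n by (simp add: K_def)
    fix x \<omega> :: 'a and \<tau> :: real
    assume x\<omega>: "(x, \<omega>) \<in> cosphere" and \<tau>: "0 < \<tau>" "\<tau> < 1"
    have \<omega>: "norm \<omega> = 1" using x\<omega> by (simp add: cosphere_def)
    define \<delta> where "\<delta> = \<tau> / 10"
    have \<delta>: "0 < \<delta>" "\<delta> \<le> 1/2" "9 * \<delta> < \<tau>" using \<tau> by (auto simp: \<delta>_def)
    define Y where "Y = {y. \<bar>(y - x) \<bullet> \<omega>\<bar> < \<delta>\<^sup>2 \<and> norm ((y - x) - ((y - x) \<bullet> \<omega>) *\<^sub>R \<omega>) < \<delta>}"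
    define C where "C = {\<nu>. \<nu> \<in> sphere 0 1 \<and> 0 < \<nu> \<bullet> \<omega> \<and> norm (\<nu> - (\<nu> \<bullet> \<omega>) *\<^sub>R \<omega>) < \<delta>}"
    have "Y \<in> sets borel" unfolding Y_def
      by (intro borel_open open_Collect_conj open_Collect_less continuous_intros)
    moreover have "C \<in> sets borel" unfolding C_def by (rule sets_sphere_cap)
    ultimately have "emeasure lborel Y * emeasure sphere_measure C \<le> vol (sR_ball (x, \<omega>) \<tau>)"
      using slab_Times_cap_subset_sR_ball[OF assms \<omega> \<delta>, of x]
      by (intro emeasure_Times_le_vol_sR_ball[OF assms]) (simp_all add: Y_def C_def)
    moreover have "ennreal (2 * \<delta>\<^sup>2 * (2 * \<delta> / DIM('a)) ^ (DIM('a) - 1)) *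
        ennreal (real DIM('a) * ((1/4) * (\<delta> / DIM('a)) ^ (DIM('a) - 1)))
        \<le> emeasure lborel Y * emeasure sphere_measure C"
      unfolding Y_def C_def using \<omega> \<delta> by (intro mult_mono emeasure_slab_ge emeasure_sphere_cap_ge) auto
    moreover have "ennreal (2 * \<delta>\<^sup>2 * (2 * \<delta> / DIM('a)) ^ (DIM('a) - 1)) *
        ennreal (real DIM('a) * ((1/4) * (\<delta> / DIM('a)) ^ (DIM('a) - 1)))
        = ennreal (K * (1/10) ^ (2 * DIM('a)) * \<tau> ^ (2 * DIM('a)))"
    proof -
      have "\<delta> ^ (2 * Suc m) = \<delta>\<^sup>2 * \<delta> ^ m * \<delta> ^ m"
        by (simp add: power2_eq_square flip: power_add mult_2)
      then have "2 * \<delta>\<^sup>2 * (2 * \<delta> / n) ^ m * (n * ((1/4) * (\<delta> / n) ^ m)) = K * \<delta> ^ (2 * Suc m)"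
        by (simp add: K_def power_divide power_mult_distrib)
      also have "\<delta> ^ (2 * Suc m) = (1/10) ^ (2 * Suc m) * \<tau> ^ (2 * Suc m)"
        by (simp add: \<delta>_def power_divide)
      finally have "2 * \<delta>\<^sup>2 * (2 * \<delta> / n) ^ m * (n * ((1/4) * (\<delta> / n) ^ m))
          = K * (1/10) ^ (2 * Suc m) * \<tau> ^ (2 * Suc m)" by (simp only: mult.assoc)
      then have "2 * \<delta>\<^sup>2 * (2 * \<delta> / DIM('a)) ^ (DIM('a) - 1) * (real DIM('a) * ((1/4) * (\<delta> / DIM('a)) ^ (DIM('a) - 1)))
          = K * (1/10) ^ (2 * DIM('a)) * \<tau> ^ (2 * DIM('a))" by (simp only: n_def m diff_Suc_1)
      then show ?thesis using \<delta>(1) by (simp add: ennreal_mult'[symmetric])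
    qed
    ultimately show "ennreal (K * (1/10) ^ (2 * DIM('a)) * \<tau> ^ (2 * DIM('a))) \<le> vol (sR_ball (x, \<omega>) \<tau>)"
      by (metis order_trans)
  qed
qed

lemma vol_sR_ball_le_large:
  fixes x \<omega> :: "'a::euclidean_space" and \<tau> :: real
  assumes "0 \<le> \<tau>"
  shows "vol (sR_ball (x, \<omega>) \<tau>) \<le> ennreal (2 ^ DIM('a) * measure sphere_measure (UNIV :: 'a set) * \<tau> ^ DIM('a))"
proof -
  obtain e :: 'a where e: "e \<in> Basis" using nonempty_Basis by blast
  define Y where "Y = cbox (x + basis_split e (- \<tau>) (- \<tau>)) (x + basis_split e \<tau> \<tau>)"
  have Y: "Y \<in> sets borel" by (simp add: Y_def)
  have "sR_ball (x, \<omega>) \<tau> \<subseteq> Y \<times> UNIV"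
  proof
    fix q assume q: "q \<in> sR_ball (x, \<omega>) \<tau>"
    obtain y \<nu> where q_eq: "q = (y, \<nu>)" by fastforce
    have "norm (y - x) \<le> \<tau>" using q unfolding q_eq by (rule mem_sR_ball_displacement_bounds)
    then have "- \<tau> \<le> (y - x) \<bullet> b \<and> (y - x) \<bullet> b \<le> \<tau>" if "b \<in> Basis" for b
      using Basis_le_norm[OF that, of "y - x"] by (simp add: abs_le_iff)
    then have "y \<in> Y" unfolding Y_def mem_cbox_basis_split by simp
    then show "q \<in> Y \<times> UNIV" by (simp add: q_eq)
  qed
  then have "vol (sR_ball (x, \<omega>) \<tau>) \<le> emeasure lborel Y * emeasure sphere_measure (UNIV :: 'a set)"
    using vol_mono[OF _ Times_in_sets_borel[OF Y sets.top[of borel, unfolded space_borel]]]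
    by (simp add: vol_Times[OF Y])
  also have "\<dots> = ennreal ((2 * \<tau>) ^ DIM('a)) * ennreal (measure sphere_measure (UNIV :: 'a set))"
  proof -
    have "(2 * \<tau>) * (2 * \<tau>) ^ (DIM('a) - 1) = (2 * \<tau>) ^ DIM('a)"
      using power_minus_mult[of "DIM('a)" "2 * \<tau>"] by (simp add: mult.commute)
    then have "emeasure lborel Y = ennreal ((2 * \<tau>) ^ DIM('a))"
      using emeasure_box_basis_split(2)[OF e, of "- \<tau>" \<tau> "- \<tau>" \<tau> x] assms by (simp add: Y_def)
    then show ?thesis
      using finite_measure.emeasure_eq_measure[OF finite_measure_sphere_measure, of "UNIV :: 'a set"] by simp
  qed
  also have "\<dots> = ennreal (2 ^ DIM('a) * measure sphere_measure (UNIV :: 'a set) * \<tau> ^ DIM('a))"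
    using assms by (simp add: ennreal_mult'[symmetric] power_mult_distrib mult_ac)
  finally show ?thesis .
qed

lemma box_Times_sphere_subset_sR_ball:
  fixes x \<omega> e :: "'a::euclidean_space"
  assumes "DIM('a) \<ge> 2" "norm \<omega> = 1" "e \<in> Basis" "real DIM('a) * a + 2 * pi < \<tau>"
  shows "box (x + basis_split e (- a) (- a)) (x + basis_split e a a) \<times> sphere 0 1 \<subseteq> sR_ball (x, \<omega>) \<tau>"
proof clarify
  fix y \<nu> :: 'a assume "y \<in> box (x + basis_split e (- a) (- a)) (x + basis_split e a a)" "\<nu> \<in> sphere 0 1"
  then have y: "\<forall>b\<in>Basis. - a < (y - x) \<bullet> b \<and> (y - x) \<bullet> b < a" and \<nu>: "norm \<nu> = 1"
    by (simp_all add: mem_box_basis_split)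
  from y have "norm (y - x) \<le> a + real (DIM('a) - 1) * a"
    by (intro norm_le_sum_Basis_if[OF _ assms(3)]) (auto simp: abs_le_iff)
  then have "norm (y - x) + 2 * pi < \<tau>"
    using assms(4) DIM_positive[where 'a='a] by (simp add: of_nat_diff algebra_simps)
  then show "(y, \<nu>) \<in> sR_ball (x, \<omega>) \<tau>"
    by (intro sR_reachable_imp_mem_sR_ball[OF sR_reachable_far[OF assms(1,2) \<nu>]]) auto
qed

lemma vol_sR_ball_ge_far:
  assumes "DIM('a::euclidean_space) \<ge> 2"
  obtains B where "0 < B"
    "\<And>x (\<omega>::'a) \<tau>. (x, \<omega>) \<in> cosphere \<Longrightarrow> 16 \<le> \<tau> \<Longrightarrow>
       ennreal (B * \<tau> ^ DIM('a)) \<le> vol (sR_ball (x, \<omega>) \<tau>)"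
proof -
  define n where "n = real DIM('a)"
  have n: "1 \<le> n" by (simp add: n_def DIM_positive Suc_le_eq)
  define c where "c = n * ((1/4) * ((1/2) / n) ^ (DIM('a) - 1))"
  show ?thesis
  proof (rule that[of "(1 / n) ^ DIM('a) * c"])
    show "0 < (1 / n) ^ DIM('a) * c" using n by (simp add: c_def)
    fix x \<omega> :: 'a and \<tau> :: real
    assume x\<omega>: "(x, \<omega>) \<in> cosphere" and \<tau>: "16 \<le> \<tau>"
    have \<omega>: "norm \<omega> = 1" using x\<omega> by (simp add: cosphere_def)
    obtain e :: 'a where e: "e \<in> Basis" using nonempty_Basis by blast
    define a where "a = \<tau> / (2 * n)"
    have a: "0 < a" "n * a + 2 * pi < \<tau>" using \<tau> n pi_less_4 by (auto simp: a_def)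
    define Y where "Y = box (x + basis_split e (- a) (- a)) (x + basis_split e a a)"
    define C where "C = {\<nu>. \<nu> \<in> sphere 0 1 \<and> 0 < \<nu> \<bullet> \<omega> \<and> norm (\<nu> - (\<nu> \<bullet> \<omega>) *\<^sub>R \<omega>) < 1/2}"
    have "Y \<times> C \<subseteq> sR_ball (x, \<omega>) \<tau>"
      using box_Times_sphere_subset_sR_ball[OF assms \<omega> e, of a \<tau> x] a by (auto simp: Y_def C_def n_def)
    then have vol: "emeasure lborel Y * emeasure sphere_measure C \<le> vol (sR_ball (x, \<omega>) \<tau>)"
      by (intro emeasure_Times_le_vol_sR_ball[OF assms]) (simp_all add: Y_def C_def sets_sphere_cap)
    have box: "emeasure lborel Y = ennreal ((1 / n) ^ DIM('a) * \<tau> ^ DIM('a))"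
    proof -
      have "(2 * a) * (2 * a) ^ (DIM('a) - 1) = (2 * a) ^ DIM('a)"
        using power_minus_mult[of "DIM('a)" "2 * a"] by (simp add: mult.commute)
      moreover have "(2 * a) ^ DIM('a) = (1 / n) ^ DIM('a) * \<tau> ^ DIM('a)"
        using n by (simp add: a_def power_divide)
      ultimately show ?thesis
        using emeasure_box_basis_split(1)[OF e, of "- a" a "- a" a x] a by (simp add: Y_def)
    qed
    have cap: "ennreal c \<le> emeasure sphere_measure C"
      unfolding c_def C_def n_def using \<omega> by (intro emeasure_sphere_cap_ge) auto
    have "0 \<le> (1 / n) ^ DIM('a) * \<tau> ^ DIM('a)" using n \<tau> by simp
    then have "ennreal ((1 / n) ^ DIM('a) * c * \<tau> ^ DIM('a)) = ennreal ((1 / n) ^ DIM('a) * \<tau> ^ DIM('a)) * ennreal c"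
      using ennreal_mult'[of "(1 / n) ^ DIM('a) * \<tau> ^ DIM('a)" c] by (simp add: mult_ac)
    also have "\<dots> \<le> emeasure lborel Y * emeasure sphere_measure C"
      unfolding box using cap by (rule mult_left_mono) simp
    finally show "ennreal ((1 / n) ^ DIM('a) * c * \<tau> ^ DIM('a)) \<le> vol (sR_ball (x, \<omega>) \<tau>)"
      using vol by (rule order_trans)
  qed
qed

lemma vol_sR_ball_ge_large:
  assumes "DIM('a::euclidean_space) \<ge> 2"
  obtains B where "0 < B"
    "\<And>x (\<omega>::'a) \<tau>. (x, \<omega>) \<in> cosphere \<Longrightarrow> 1 \<le> \<tau> \<Longrightarrow>
       ennreal (B * \<tau> ^ DIM('a)) \<le> vol (sR_ball (x, \<omega>) \<tau>)"
proof -
  obtain B1 where B1: "0 < B1" "\<And>x (\<omega>::'a) \<tau>. (x, \<omega>) \<in> cosphere \<Longrightarrow> 0 < \<tau> \<Longrightarrow> \<tau> < 1 \<Longrightarrow>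
      ennreal (B1 * \<tau> ^ (2 * DIM('a))) \<le> vol (sR_ball (x, \<omega>) \<tau>)"
    using vol_sR_ball_ge_small[OF assms] by blast
  obtain B2 where B2: "0 < B2" "\<And>x (\<omega>::'a) \<tau>. (x, \<omega>) \<in> cosphere \<Longrightarrow> 16 \<le> \<tau> \<Longrightarrow>
      ennreal (B2 * \<tau> ^ DIM('a)) \<le> vol (sR_ball (x, \<omega>) \<tau>)"
    using vol_sR_ball_ge_far[OF assms] by blast
  \<comment> \<open>for \<open>1 \<le> \<tau> < 16\<close> the ball contains the ball of radius \<open>1/2\<close>\<close>
  define B where "B = min B2 (B1 * (1/2) ^ (2 * DIM('a)) / 16 ^ DIM('a))"
  show ?thesis
  proof (rule that[of B])
    show "0 < B" using B1(1) B2(1) by (simp add: B_def)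
    fix x \<omega> :: 'a and \<tau> :: real
    assume x\<omega>: "(x, \<omega>) \<in> cosphere" and \<tau>: "1 \<le> \<tau>"
    show "ennreal (B * \<tau> ^ DIM('a)) \<le> vol (sR_ball (x, \<omega>) \<tau>)"
    proof (cases "16 \<le> \<tau>")
      case True
      have "ennreal (B * \<tau> ^ DIM('a)) \<le> ennreal (B2 * \<tau> ^ DIM('a))"
        using \<tau> by (intro ennreal_leI mult_right_mono) (auto simp: B_def)
      also have "\<dots> \<le> vol (sR_ball (x, \<omega>) \<tau>)" by (rule B2(2)[OF x\<omega> True])
      finally show ?thesis .
    next
      case False
      have "B * \<tau> ^ DIM('a) \<le> (B1 * (1/2) ^ (2 * DIM('a)) / 16 ^ DIM('a)) * 16 ^ DIM('a)"
        using False \<tau> B1(1) by (intro mult_mono power_mono) (auto simp: B_def)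
      then have "ennreal (B * \<tau> ^ DIM('a)) \<le> ennreal (B1 * (1/2) ^ (2 * DIM('a)))"
        by (intro ennreal_leI) simp
      also have "\<dots> \<le> vol (sR_ball (x, \<omega>) (1/2))" by (rule B1(2)[OF x\<omega>]) auto
      also have "\<dots> \<le> vol (sR_ball (x, \<omega>) \<tau>)"
        using \<tau> by (intro vol_mono sR_ball_mono sets_sR_ball[OF assms]) auto
      finally show ?thesis .
    qed
  qed
qed

lemma vol_sR_ball_bounds:
  assumes "DIM('a::euclidean_space) \<ge> 2"
  obtains C where "0 < C"
    "\<And>x (\<omega>::'a) \<tau>. (x, \<omega>) \<in> cosphere \<Longrightarrow> 0 < \<tau> \<Longrightarrow> \<tau> < 1 \<Longrightarrow>
       ennreal (\<tau> ^ (2 * DIM('a)) / C) \<le> vol (sR_ball (x, \<omega>) \<tau>) \<and>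
       vol (sR_ball (x, \<omega>) \<tau>) \<le> ennreal (C * \<tau> ^ (2 * DIM('a)))"
    "\<And>x (\<omega>::'a) \<tau>. (x, \<omega>) \<in> cosphere \<Longrightarrow> 1 \<le> \<tau> \<Longrightarrow>
       ennreal (\<tau> ^ DIM('a) / C) \<le> vol (sR_ball (x, \<omega>) \<tau>) \<and>
       vol (sR_ball (x, \<omega>) \<tau>) \<le> ennreal (C * \<tau> ^ DIM('a))"
proof -
  obtain B1 where B1: "0 < B1" "\<And>x (\<omega>::'a) \<tau>. (x, \<omega>) \<in> cosphere \<Longrightarrow> 0 < \<tau> \<Longrightarrow> \<tau> < 1 \<Longrightarrow>
      ennreal (B1 * \<tau> ^ (2 * DIM('a))) \<le> vol (sR_ball (x, \<omega>) \<tau>)"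
    using vol_sR_ball_ge_small[OF assms] by blast
  obtain B2 where B2: "0 < B2" "\<And>x (\<omega>::'a) \<tau>. (x, \<omega>) \<in> cosphere \<Longrightarrow> 1 \<le> \<tau> \<Longrightarrow>
      ennreal (B2 * \<tau> ^ DIM('a)) \<le> vol (sR_ball (x, \<omega>) \<tau>)"
    using vol_sR_ball_ge_large[OF assms] by blast
  define A1 :: real where "A1 = real DIM('a) * 4 ^ DIM('a)"
  define A2 where "A2 = 2 ^ DIM('a) * measure sphere_measure (UNIV :: 'a set)"
  define C where "C = max (max A1 A2) (max (1 / B1) (1 / B2))"
  have C_ge: "A1 \<le> C" "A2 \<le> C" "1 / B1 \<le> C" "1 / B2 \<le> C" by (auto simp: C_def)
  have inv: "1 / C \<le> B" if "1 / B \<le> C" "0 < B" for B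
    using le_imp_inverse_le[OF that(1)] that(2) by (simp add: inverse_eq_divide)
  have "0 < 1 / B1" using B1(1) by simp
  then have C: "0 < C" "1 / C \<le> B1" "1 / C \<le> B2"
    using order_less_le_trans[OF _ C_ge(3)] inv[OF C_ge(3) B1(1)] inv[OF C_ge(4) B2(1)] by auto
  have lower: "ennreal (t / C) \<le> ennreal (B * t)" if "1 / C \<le> B" "0 \<le> t" for B t
  proof (rule ennreal_leI)
    have "t / C = (1 / C) * t" by simp
    also have "\<dots> \<le> B * t" by (rule mult_right_mono[OF that])
    finally show "t / C \<le> B * t" .
  qed
  have upper: "ennreal (A * t) \<le> ennreal (C * t)" if "A \<le> C" "0 \<le> t" for A t
    by (rule ennreal_leI, rule mult_right_mono[OF that])
  show ?thesis
  proof (rule that[OF C(1)])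
    fix x \<omega> :: 'a and \<tau> :: real
    assume x\<omega>: "(x, \<omega>) \<in> cosphere" and \<tau>: "0 < \<tau>" "\<tau> < 1"
    have "ennreal (\<tau> ^ (2 * DIM('a)) / C) \<le> ennreal (B1 * \<tau> ^ (2 * DIM('a)))"
      using \<tau> by (intro lower C) simp
    also have "\<dots> \<le> vol (sR_ball (x, \<omega>) \<tau>)" by (rule B1(2)[OF x\<omega> \<tau>])
    finally show "ennreal (\<tau> ^ (2 * DIM('a)) / C) \<le> vol (sR_ball (x, \<omega>) \<tau>) \<and>
        vol (sR_ball (x, \<omega>) \<tau>) \<le> ennreal (C * \<tau> ^ (2 * DIM('a)))"
      using order_trans[OF vol_sR_ball_le_small[OF x\<omega> \<tau>(1), folded A1_def] upper[OF C_ge(1)]] \<tau>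
      by simp
  next
    fix x \<omega> :: 'a and \<tau> :: real
    assume x\<omega>: "(x, \<omega>) \<in> cosphere" and \<tau>: "1 \<le> \<tau>"
    have "ennreal (\<tau> ^ DIM('a) / C) \<le> ennreal (B2 * \<tau> ^ DIM('a))"
      using \<tau> by (intro lower C) simp
    also have "\<dots> \<le> vol (sR_ball (x, \<omega>) \<tau>)" by (rule B2(2)[OF x\<omega> \<tau>])
    finally show "ennreal (\<tau> ^ DIM('a) / C) \<le> vol (sR_ball (x, \<omega>) \<tau>) \<and>
        vol (sR_ball (x, \<omega>) \<tau>) \<le> ennreal (C * \<tau> ^ DIM('a))"
      using order_trans[OF vol_sR_ball_le_large[of \<tau> x \<omega>, folded A2_def] upper[OF C_ge(2)]] \<tau>
      by simp
  qed
qed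

lemma two_regime_power_bounds_imp_doubling:
  fixes V :: "real \<Rightarrow> ennreal" and C c \<tau> :: real and n :: nat
  assumes C: "0 < C"
    and small: "\<And>t. 0 < t \<Longrightarrow> t < 1 \<Longrightarrow> ennreal (t ^ (2 * n) / C) \<le> V t \<and> V t \<le> ennreal (C * t ^ (2 * n))"
    and large: "\<And>t. 1 \<le> t \<Longrightarrow> ennreal (t ^ n / C) \<le> V t \<and> V t \<le> ennreal (C * t ^ n)"
    and \<tau>: "0 < \<tau>" and c: "1 \<le> c"
  shows "V (c * \<tau>) \<le> ennreal (C\<^sup>2 * c ^ (2 * n)) * V \<tau>"
proof -
  have K: "0 \<le> C\<^sup>2 * c ^ (2 * n)" using c by simp
  have upper: "V (c * \<tau>) \<le> ennreal (C * (c * \<tau>) ^ (2 * n))" if "\<tau> < 1"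
  proof (cases "c * \<tau> < 1")
    case True
    then show ?thesis using small[of "c * \<tau>"] \<tau> c by simp
  next
    case False
    then have "V (c * \<tau>) \<le> ennreal (C * (c * \<tau>) ^ n)" using large by simp
    also have "\<dots> \<le> ennreal (C * (c * \<tau>) ^ (2 * n))"
      using False C by (intro ennreal_leI mult_left_mono power_increasing) auto
    finally show ?thesis .
  qed
  show ?thesis
  proof (cases "\<tau> < 1")
    case True
    have "ennreal (C\<^sup>2 * c ^ (2 * n)) * ennreal (\<tau> ^ (2 * n) / C) = ennreal (C * (c * \<tau>) ^ (2 * n))"
      using K \<tau> C by (simp add: ennreal_mult'[symmetric] power_mult_distrib power2_eq_square)
    then show ?thesis
      using upper[OF True] mult_left_mono[OF conjunct1[OF small[OF \<tau> True]], of "ennreal (C\<^sup>2 * c ^ (2 * n))"]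
      by simp
  next
    case False
    have "1 * 1 \<le> c * \<tau>" using False c by (intro mult_mono) auto
    then have "V (c * \<tau>) \<le> ennreal (C * c ^ n * \<tau> ^ n)"
      using large[of "c * \<tau>"] by (simp add: power_mult_distrib mult.assoc)
    also have "\<dots> \<le> ennreal (C * c ^ (2 * n) * \<tau> ^ n)"
      using c C \<tau> by (intro ennreal_leI mult_right_mono mult_left_mono power_increasing) auto
    also have "\<dots> = ennreal (C\<^sup>2 * c ^ (2 * n)) * ennreal (\<tau> ^ n / C)"
      using K \<tau> C by (simp add: ennreal_mult'[symmetric] power2_eq_square)
    also have "\<dots> \<le> ennreal (C\<^sup>2 * c ^ (2 * n)) * V \<tau>"
      using large[of \<tau>] False by (intro mult_left_mono) auto
    finally show ?thesis .
  qed
qed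

theorem mainTheorem2:
  assumes "DIM('a::euclidean_space) \<ge> 2"
  shows "\<exists>C>0. (\<forall>x (w::'a) \<tau>. (x, w) \<in> cosphere \<longrightarrow>
            ((0 < \<tau> \<and> \<tau> < 1 \<longrightarrow>
               ennreal (\<tau> ^ (2 * DIM('a)) / C) \<le> vol (sR_ball (x, w) \<tau>) \<and>
               vol (sR_ball (x, w) \<tau>) \<le> ennreal (C * \<tau> ^ (2 * DIM('a)))) \<and>
             (1 \<le> \<tau> \<longrightarrow>
               ennreal (\<tau> ^ DIM('a) / C) \<le> vol (sR_ball (x, w) \<tau>) \<and>
               vol (sR_ball (x, w) \<tau>) \<le> ennreal (C * \<tau> ^ DIM('a))))) \<and>
          (\<forall>x (w::'a) \<tau> c. (x, w) \<in> cosphere \<longrightarrow> 0 < \<tau> \<longrightarrow> 1 \<le> c \<longrightarrow>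
             vol (sR_ball (x, w) (c * \<tau>)) \<le>
               ennreal (C ^ 2 * c ^ (2 * DIM('a))) * vol (sR_ball (x, w) \<tau>))"
proof -
  obtain C where C: "0 < C"
    and small: "\<And>x (w::'a) \<tau>. (x, w) \<in> cosphere \<Longrightarrow> 0 < \<tau> \<Longrightarrow> \<tau> < 1 \<Longrightarrow>
       ennreal (\<tau> ^ (2 * DIM('a)) / C) \<le> vol (sR_ball (x, w) \<tau>) \<and>
       vol (sR_ball (x, w) \<tau>) \<le> ennreal (C * \<tau> ^ (2 * DIM('a)))"
    and large: "\<And>x (w::'a) \<tau>. (x, w) \<in> cosphere \<Longrightarrow> 1 \<le> \<tau> \<Longrightarrow>
       ennreal (\<tau> ^ DIM('a) / C) \<le> vol (sR_ball (x, w) \<tau>) \<and>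
       vol (sR_ball (x, w) \<tau>) \<le> ennreal (C * \<tau> ^ DIM('a))"
    using vol_sR_ball_bounds[OF assms] by blast
  have "vol (sR_ball (x, w) (c * \<tau>)) \<le> ennreal (C\<^sup>2 * c ^ (2 * DIM('a))) * vol (sR_ball (x, w) \<tau>)"
    if "(x, w) \<in> cosphere" "0 < \<tau>" "1 \<le> c" for x w :: 'a and \<tau> c :: real
    using small[OF that(1)] large[OF that(1)] that(2,3)
    by (intro two_regime_power_bounds_imp_doubling[OF C]) auto
  then show ?thesis using C small large by blast
qed

end
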